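(* Let $\mathcal A_1,\mathcal B_1:U_1\to V_1$ be surjective linear maps of finite-dimensional vector spaces over a field $\mathbb F$. Let $U_2=U_1/\operatorname{Ker}\mathcal B_1$, $V_2=V_1/\mathcal A_1(\operatorname{Ker}\mathcal B_1)$, and let $\mathcal A_2,\mathcal B_2:U_2\to V_2$ be the maps induced by $\mathcal A_1,\mathcal B_1$; similarly let $U_3=U_2/\operatorname{Ker}\mathcal B_2$. Let $(A_1,B_1)$ and $(A_2,B_2)$ be the matrix pairs of $(\mathcal A_1,\mathcal B_1)$ and $(\mathcal A_2,\mathcal B_2)$ in arbitrary bases, and take any regularizing decomposition of $(A_1,B_1)$. Then a regularizing decomposition of $(A_2,B_2)$ is obtained from it by deleting all summands $(L_1,R_1)=(0_{01},0_{01})$, replacing each summand $(L_k,R_k)$ with $k\ge2$ by $(L_{k-1},R_{k-1})$, and leaving the regular part unchanged. The number of summands $(L_1,R_1)$ in the decomposition of $(A_1,B_1)$ equals $\dim U_1-2\dim U_2+\dim U_3$.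
   Context: $J_k(0)$ denotes the $k\times k$ nilpotent Jordan block with ones directly below the diagonal. $L_k$ and $R_k$ are the $(k-1)\times k$ matrices obtained from $I_k$ by deleting its last row, respectively its first row ($L_1=R_1=0_{01}$ is the $0\times1$ matrix). Direct sums of matrix pairs are blockwise. Two matrix pairs $(A,B)$, $(A',B')$ are equivalent if $SA=A'R$, $SB=B'R$ for nonsingular $S,R$. A regularizing decomposition of a matrix pair $(A,B)$ is a direct sum $(I_r,D)\oplus(M_1,N_1)\oplus\dots\oplus(M_t,N_t)$ equivalent to $(A,B)$, in which $D$ is $r\times r$ nonsingular (the regular part is $(I_r,D)$) and each $(M_i,N_i)$ is one of $(I_k,J_k(0))$, $(J_k(0),I_k)$, $(L_k,R_k)$, $(L_k^T,R_k^T)$, $k\ge1$. *)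

theory Defs
  imports "Jordan_Normal_Form.Matrix"
begin

definition Jblk :: "nat \<Rightarrow> 'a::field mat" where
  "Jblk k = mat k k (\<lambda>(i,j). if i = Suc j then 1 else 0)"

definition Lblk :: "nat \<Rightarrow> 'a::field mat" where
  "Lblk k = mat (k - 1) k (\<lambda>(i,j). if j = i then 1 else 0)"

definition Rblk :: "nat \<Rightarrow> 'a::field mat" where
  "Rblk k = mat (k - 1) k (\<lambda>(i,j). if j = Suc i then 1 else 0)"

datatype blk = IJ nat | JI nat | LR nat | LRT nat

fun blk_size :: "blk \<Rightarrow> nat" where
  "blk_size (IJ k) = k" | "blk_size (JI k) = k" | "blk_size (LR k) = k" | "blk_size (LRT k) = k"

fun blk_pair :: "blk \<Rightarrow> 'a::field mat \<times> 'a mat" where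
  "blk_pair (IJ k) = (1\<^sub>m k, Jblk k)"
| "blk_pair (JI k) = (Jblk k, 1\<^sub>m k)"
| "blk_pair (LR k) = (Lblk k, Rblk k)"
| "blk_pair (LRT k) = (transpose_mat (Lblk k), transpose_mat (Rblk k))"

definition dsum :: "'a::field mat \<Rightarrow> 'a mat \<Rightarrow> 'a mat" where
  "dsum A B = four_block_mat A (0\<^sub>m (dim_row A) (dim_col B)) (0\<^sub>m (dim_row B) (dim_col A)) B"

definition dsum_pair :: "'a::field mat \<times> 'a mat \<Rightarrow> 'a mat \<times> 'a mat \<Rightarrow> 'a mat \<times> 'a mat" where
  "dsum_pair P Q = (dsum (fst P) (fst Q), dsum (snd P) (snd Q))"

definition decomp_pair :: "nat \<Rightarrow> 'a::field mat \<Rightarrow> blk list \<Rightarrow> 'a mat \<times> 'a mat" where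
  "decomp_pair r D bs = foldl (\<lambda>P b. dsum_pair P (blk_pair b)) (1\<^sub>m r, D) bs"

definition pair_equiv :: "'a::field mat \<Rightarrow> 'a mat \<Rightarrow> 'a mat \<Rightarrow> 'a mat \<Rightarrow> bool" where
  "pair_equiv A B A' B' \<longleftrightarrow>
     dim_row B = dim_row A \<and> dim_col B = dim_col A \<and>
     A' \<in> carrier_mat (dim_row A) (dim_col A) \<and> B' \<in> carrier_mat (dim_row A) (dim_col A) \<and>
     (\<exists>S R. S \<in> carrier_mat (dim_row A) (dim_row A) \<and> R \<in> carrier_mat (dim_col A) (dim_col A) \<and>
        invertible_mat S \<and> invertible_mat R \<and> S * A = A' * R \<and> S * B = B' * R)"

definition reg_decomp :: "'a::field mat \<Rightarrow> 'a mat \<Rightarrow> nat \<Rightarrow> 'a mat \<Rightarrow> blk list \<Rightarrow> bool" where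
  "reg_decomp A B r D bs \<longleftrightarrow>
     D \<in> carrier_mat r r \<and> invertible_mat D \<and> (\<forall>b\<in>set bs. 1 \<le> blk_size b) \<and>
     pair_equiv A B (fst (decomp_pair r D bs)) (snd (decomp_pair r D bs))"

fun shrink_blk :: "blk \<Rightarrow> blk" where
  "shrink_blk (LR k) = LR (k - 1)"
| "shrink_blk b = b"

definition lc :: "nat \<Rightarrow> (nat \<Rightarrow> 'a::field) \<Rightarrow> 'a vec list \<Rightarrow> 'a vec" where
  "lc n c us = foldr (\<lambda>i acc. c i \<cdot>\<^sub>v (us ! i) + acc) [0..<length us] (0\<^sub>v n)"

text \<open>qbasis n W us: the classes of us (vectors of F^n) form a basis of the quotient F^n / W.\<close>

definition qbasis :: "nat \<Rightarrow> 'a::field vec set \<Rightarrow> 'a vec list \<Rightarrow> bool" where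
  "qbasis n W us \<longleftrightarrow>
     set us \<subseteq> carrier_vec n \<and>
     (\<forall>c. lc n c us \<in> W \<longrightarrow> (\<forall>i<length us. c i = 0)) \<and>
     (\<forall>u\<in>carrier_vec n. \<exists>c. u - lc n c us \<in> W)"

definition surj_mat :: "'a::field mat \<Rightarrow> bool" where
  "surj_mat A \<longleftrightarrow> (\<forall>y\<in>carrier_vec (dim_row A). \<exists>x\<in>carrier_vec (dim_col A). A *\<^sub>v x = y)"

text \<open>(M2 in bases us of U/K, vs of V/W) is the matrix of the map U/K \<rightarrow> V/W induced by M:
  M us_j \<equiv> sum_i M2_ij vs_i  (mod W).\<close>

definition induced_mat :: "nat \<Rightarrow> 'a::field mat \<Rightarrow> 'a vec set \<Rightarrow> 'a vec list \<Rightarrow> 'a vec list \<Rightarrow> 'a mat \<Rightarrow> bool" where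
  "induced_mat m M W us vs M2 \<longleftrightarrow>
     M2 \<in> carrier_mat (length vs) (length us) \<and>
     (\<forall>j<length us. M *\<^sub>v (us ! j) - lc m (\<lambda>i. M2 $$ (i,j)) vs \<in> W)"

end

theory Submission
  imports Defs "Jordan_Normal_Form.Matrix_Kernel"
begin

text \<open>The passage from \<open>(A\<^sub>1, B\<^sub>1)\<close> to the induced pair \<open>(A\<^sub>2, B\<^sub>2)\<close> on
  \<open>F\<^sup>n / Ker B\<^sub>1 \<rightarrow> F\<^sup>m / A\<^sub>1(Ker B\<^sub>1)\<close> is determined up to equivalence by the pair, is invariant
  under equivalence and commutes with direct sums, so it can be computed summand by summand.
  Surjectivity of \<open>A\<^sub>1\<close> and \<open>B\<^sub>1\<close> excludes every summand with a zero row, leaving the regular part,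
  which is reproduced, and blocks \<open>(L\<^sub>k, R\<^sub>k)\<close>: here \<open>Ker R\<^sub>k\<close> is the first coordinate axis and
  \<open>L\<^sub>k\<close> maps it onto the first axis of \<open>F\<^sup>k\<^sup>-\<^sup>1\<close>, so the block reduces to \<open>(L\<^sub>k\<^sub>-\<^sub>1, R\<^sub>k\<^sub>-\<^sub>1)\<close>,
  the empty pair when \<open>k = 1\<close>. For the count, \<open>B\<^sub>1\<close> induces an isomorphism
  \<open>U\<^sub>3 \<cong> V\<^sub>2\<close>, and a block \<open>(L\<^sub>k, R\<^sub>k)\<close> contributes \<open>k - 2(k - 1) + max 0 (k - 2)\<close>
  to \<open>dim U\<^sub>1 - 2 dim U\<^sub>2 + dim V\<^sub>2\<close>, which is 1 for \<open>k = 1\<close> and 0 otherwise.\<close>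

lemma lc_eq_mat_of_cols_mult_vec:
  assumes us: "set us \<subseteq> carrier_vec n"
  shows "lc n c us = mat_of_cols n us *\<^sub>v vec (length us) c"
proof -
  have "foldr (\<lambda>i acc. c i \<cdot>\<^sub>v (us ! i) + acc) is (0\<^sub>v n) = vec n (\<lambda>t. \<Sum>i\<leftarrow>is. c i * us ! i $ t)"
    if "set is \<subseteq> {..<length us}" for "is"
    using that
  proof (induction "is")
    case (Cons i "is")
    then have "us ! i \<in> carrier_vec n" using us by auto
    with Cons show ?case by (intro eq_vecI) auto
  qed (intro eq_vecI, auto)
  from this[of "[0..<length us]"]
  have "lc n c us = vec n (\<lambda>t. \<Sum>i\<leftarrow>[0..<length us]. c i * us ! i $ t)"
    unfolding lc_def by (simp add: atLeast0LessThan)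
  also have "\<dots> = mat_of_cols n us *\<^sub>v vec (length us) c"
    by (intro eq_vecI) (auto intro!: sum.cong simp: scalar_prod_def mat_of_cols_index sum_list_sum_nth mult.commute)
  finally show ?thesis .
qed

lemma zero_mat_mult_vec: "(x :: 'a::field vec) \<in> carrier_vec n \<Longrightarrow> 0\<^sub>m m n *\<^sub>v x = 0\<^sub>v m"
  by (intro eq_vecI) (auto simp: scalar_prod_def)

lemma mult_mat_vec_zero: "(A :: 'a::field mat) \<in> carrier_mat m n \<Longrightarrow> A *\<^sub>v 0\<^sub>v n = 0\<^sub>v m"
  by (intro eq_vecI) (auto simp: scalar_prod_def)

lemma invertible_matE:
  fixes S :: "'a::field mat"
  assumes S: "S \<in> carrier_mat n n" and "invertible_mat S"
  obtains Si where "Si \<in> carrier_mat n n" "S * Si = 1\<^sub>m n" "Si * S = 1\<^sub>m n"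
proof -
  obtain Si where SSi: "S * Si = 1\<^sub>m (dim_row S)" and SiS: "Si * S = 1\<^sub>m (dim_row Si)"
    using assms unfolding invertible_mat_def inverts_mat_def by auto
  have "dim_col Si = n" using arg_cong[OF SSi, of dim_col] S by simp
  moreover have "dim_row Si = n" using arg_cong[OF SiS, of dim_col] S by simp
  ultimately show thesis using that[of Si] SSi SiS S by auto
qed

lemma mult_mat_vec_cancel:
  fixes S :: "'a::field mat"
  assumes "S \<in> carrier_mat n n" "Si \<in> carrier_mat n n" "Si * S = 1\<^sub>m n" "x \<in> carrier_vec n"
  shows "Si *\<^sub>v (S *\<^sub>v x) = x"
  using assms by (metis assoc_mult_mat_vec one_mult_mat_vec)

lemma mult_mat_vec_equiv:
  fixes A :: "'a::field mat"
  assumes "S \<in> carrier_mat m m" "A \<in> carrier_mat m n" "A' \<in> carrier_mat m n"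
    "R \<in> carrier_mat n n" "S * A = A' * R" "x \<in> carrier_vec n"
  shows "S *\<^sub>v (A *\<^sub>v x) = A' *\<^sub>v (R *\<^sub>v x)"
  using assms by (metis assoc_mult_mat_vec)

lemma left_inverse_imp_dim_le:
  fixes A B :: "'a::field mat"
  assumes A: "A \<in> carrier_mat k k'" and B: "B \<in> carrier_mat k' k" and BA: "B * A = 1\<^sub>m k'"
  shows "k' \<le> k"
proof (rule ccontr)
  assume "\<not> k' \<le> k"
  then have kk: "k < k'" by simp
  define A' where "A' = mat k' k' (\<lambda>(i,j). if i < k then A $$ (i,j) else 0)"
  define B' where "B' = mat k' k' (\<lambda>(i,j). if j < k then B $$ (i,j) else 0)"
  have A': "A' \<in> carrier_mat k' k'" and B': "B' \<in> carrier_mat k' k'" unfolding A'_def B'_def by auto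
  have "B' * A' = B * A"
  proof (rule eq_matI)
    fix i j assume "i < dim_row (B * A)" "j < dim_col (B * A)"
    then have ij: "i < k'" "j < k'" using A B by auto
    have "(B' * A') $$ (i,j) = (\<Sum>t\<in>{0..<k'}. B' $$ (i,t) * A' $$ (t,j))"
      using A' B' ij by (auto simp: scalar_prod_def)
    also have "\<dots> = (\<Sum>t\<in>{0..<k}. B $$ (i,t) * A $$ (t,j))"
      by (rule sum.mono_neutral_cong_right) (use kk ij in \<open>auto simp: A'_def B'_def\<close>)
    also have "\<dots> = (B * A) $$ (i,j)" using A B ij by (auto simp: scalar_prod_def)
    finally show "(B' * A') $$ (i,j) = (B * A) $$ (i,j)" .
  qed (use A B A' B' in auto)
  then have "A' * B' = 1\<^sub>m k'" using BA mat_mult_left_right_inverse[OF B' A'] by simp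
  moreover have "(A' * B') $$ (k' - 1, k' - 1) = 0"
    using A' B' kk by (auto simp: scalar_prod_def A'_def intro!: sum.neutral)
  ultimately show False using kk by simp
qed

section \<open>Linearly closed sets and quotient bases\<close>

text \<open>Closure under all linear combinations, phrased with matrices so that kernels and images of
  matrices are immediately closed.\<close>

definition lin_closed :: "nat \<Rightarrow> 'a::field vec set \<Rightarrow> bool" where
  "lin_closed n K \<longleftrightarrow> K \<subseteq> carrier_vec n \<and>
     (\<forall>k X c. X \<in> carrier_mat n k \<longrightarrow> (\<forall>j<k. col X j \<in> K) \<longrightarrow> c \<in> carrier_vec k \<longrightarrow> X *\<^sub>v c \<in> K)"

lemma lin_closed_carrier: "lin_closed n K \<Longrightarrow> x \<in> K \<Longrightarrow> x \<in> carrier_vec n"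
  unfolding lin_closed_def by auto

lemma lin_closed_mult_vec:
  "lin_closed n K \<Longrightarrow> X \<in> carrier_mat n k \<Longrightarrow> (\<And>j. j < k \<Longrightarrow> col X j \<in> K) \<Longrightarrow> c \<in> carrier_vec k
   \<Longrightarrow> X *\<^sub>v c \<in> K"
  unfolding lin_closed_def by blast

lemma lin_closed_zero:
  assumes "lin_closed n K" shows "0\<^sub>v n \<in> K"
proof -
  have "0\<^sub>m n 0 *\<^sub>v 0\<^sub>v 0 = (0\<^sub>v n :: 'a vec)" by (intro eq_vecI) (auto simp: scalar_prod_def)
  then show ?thesis using lin_closed_mult_vec[OF assms, of "0\<^sub>m n 0" 0 "0\<^sub>v 0"] by auto
qed

lemma lin_closed_lincomb2:
  assumes K: "lin_closed n K" and x: "x \<in> K" and y: "y \<in> K"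
  shows "a \<cdot>\<^sub>v x + b \<cdot>\<^sub>v y \<in> K"
proof -
  have xy: "x \<in> carrier_vec n" "y \<in> carrier_vec n" using K x y by (auto simp: lin_closed_carrier)
  let ?X = "mat_of_cols n [x, y]" and ?c = "vec 2 (\<lambda>i. if i = 0 then a else b)"
  have "?X *\<^sub>v ?c = a \<cdot>\<^sub>v x + b \<cdot>\<^sub>v y"
    using xy by (intro eq_vecI) (auto simp: scalar_prod_def mat_of_cols_index numeral_2_eq_2 mult.commute)
  moreover have "?X *\<^sub>v ?c \<in> K"
    using xy x y by (intro lin_closed_mult_vec[OF K, of _ 2]) (auto simp: less_2_cases_iff)
  ultimately show ?thesis by simp
qed

lemma lin_closed_add: "lin_closed n K \<Longrightarrow> x \<in> K \<Longrightarrow> y \<in> K \<Longrightarrow> x + y \<in> K"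
  using lin_closed_lincomb2[of n K x y 1 1] by (simp add: lin_closed_carrier)

lemma lin_closed_diff:
  assumes K: "lin_closed n K" and x: "x \<in> K" and y: "y \<in> K"
  shows "x - y \<in> K"
proof -
  have "1 \<cdot>\<^sub>v x + (-1) \<cdot>\<^sub>v y = x - y"
    using lin_closed_carrier[OF K x] lin_closed_carrier[OF K y] by (intro eq_vecI) auto
  then show ?thesis using lin_closed_lincomb2[OF K x y] by metis
qed

lemma lin_closed_mat_kernel:
  fixes B :: "'a::field mat"
  assumes B: "B \<in> carrier_mat m n"
  shows "lin_closed n (mat_kernel B)"
  unfolding lin_closed_def
proof (intro conjI allI impI)
  show "mat_kernel B \<subseteq> carrier_vec n" by (rule mat_kernel_carrier[OF B])
  fix k and X :: "'a mat" and c :: "'a vec"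
  assume X: "X \<in> carrier_mat n k" and cols: "\<forall>j<k. col X j \<in> mat_kernel B"
    and c: "c \<in> carrier_vec k"
  have BX: "B * X = 0\<^sub>m m k"
  proof (rule eq_matI)
    fix i j assume ij: "i < dim_row (0\<^sub>m m k :: 'a mat)" "j < dim_col (0\<^sub>m m k :: 'a mat)"
    then have "B *\<^sub>v col X j = 0\<^sub>v m" using cols mat_kernelD[OF B] by auto
    then have "(B *\<^sub>v col X j) $ i = 0" using ij by simp
    then show "(B * X) $$ (i, j) = 0\<^sub>m m k $$ (i, j)" using ij B X by auto
  qed (use B X in auto)
  have "B *\<^sub>v (X *\<^sub>v c) = (B * X) *\<^sub>v c" using B X c by auto
  also have "\<dots> = 0\<^sub>v m" unfolding BX using c by (intro eq_vecI) (auto simp: scalar_prod_def)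
  finally show "X *\<^sub>v c \<in> mat_kernel B" using B X c by (auto intro: mat_kernelI)
qed

definition ker_image :: "'a::field mat \<Rightarrow> 'a mat \<Rightarrow> 'a vec set" where
  "ker_image A B = (\<lambda>x. A *\<^sub>v x) ` mat_kernel B"

lemma lin_closed_ker_image:
  fixes A B :: "'a::field mat"
  assumes A: "A \<in> carrier_mat m n" and B: "B \<in> carrier_mat m' n"
  shows "lin_closed m (ker_image A B)"
  unfolding lin_closed_def
proof (intro conjI allI impI)
  show "ker_image A B \<subseteq> carrier_vec m"
    using A mat_kernel_carrier[OF B] unfolding ker_image_def by auto
  fix k and X :: "'a mat" and c :: "'a vec"
  assume X: "X \<in> carrier_mat m k" and cols: "\<forall>j<k. col X j \<in> ker_image A B"
    and c: "c \<in> carrier_vec k"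
  have "\<forall>j<k. \<exists>x. x \<in> mat_kernel B \<and> col X j = A *\<^sub>v x"
    using cols unfolding ker_image_def by auto
  then obtain z where z: "\<And>j. j < k \<Longrightarrow> z j \<in> mat_kernel B \<and> col X j = A *\<^sub>v z j"
    by metis
  define Z where "Z = mat_of_cols n (map z [0..<k])"
  have Z: "Z \<in> carrier_mat n k" unfolding Z_def by auto
  have colZ: "\<And>j. j < k \<Longrightarrow> col Z j = z j"
    unfolding Z_def using z mat_kernelD(1)[OF B] by auto
  have "X = A * Z"
  proof (rule eq_matI)
    fix i j assume "i < dim_row (A * Z)" "j < dim_col (A * Z)"
    then have ij: "i < m" "j < k" using A Z by auto
    then have "(A * Z) $$ (i,j) = (A *\<^sub>v z j) $ i" using A Z colZ by auto
    moreover have "X $$ (i,j) = col X j $ i" using X ij by auto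
    ultimately show "X $$ (i,j) = (A * Z) $$ (i,j)" using z[OF ij(2)] by simp
  qed (use A X Z in auto)
  then have "X *\<^sub>v c = A *\<^sub>v (Z *\<^sub>v c)" using A Z c by auto
  moreover have "Z *\<^sub>v c \<in> mat_kernel B"
    using lin_closed_mat_kernel[OF B] Z colZ z c by (auto intro: lin_closed_mult_vec)
  ultimately show "X *\<^sub>v c \<in> ker_image A B" unfolding ker_image_def by auto
qed

definition quot_basis :: "'a::field vec set \<Rightarrow> 'a mat \<Rightarrow> bool" where
  "quot_basis K U \<longleftrightarrow>
     (\<forall>c\<in>carrier_vec (dim_col U). U *\<^sub>v c \<in> K \<longrightarrow> c = 0\<^sub>v (dim_col U)) \<and>
     (\<forall>u\<in>carrier_vec (dim_row U). \<exists>c\<in>carrier_vec (dim_col U). u - U *\<^sub>v c \<in> K)"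

lemma quot_basis_indep:
  "quot_basis K U \<Longrightarrow> U \<in> carrier_mat n k \<Longrightarrow> c \<in> carrier_vec k \<Longrightarrow> U *\<^sub>v c \<in> K \<Longrightarrow> c = 0\<^sub>v k"
  unfolding quot_basis_def by auto

lemma quot_basis_span:
  assumes "quot_basis K U" "U \<in> carrier_mat n k" "u \<in> carrier_vec n"
  obtains c where "c \<in> carrier_vec k" "u - U *\<^sub>v c \<in> K"
  using assms unfolding quot_basis_def by auto

lemma qbasis_imp_quot_basis:
  assumes "qbasis n K us"
  shows "quot_basis K (mat_of_cols n us)"
proof -
  have us: "set us \<subseteq> carrier_vec n" using assms unfolding qbasis_def by auto
  let ?U = "mat_of_cols n us" and ?k = "length us"
  show ?thesis unfolding quot_basis_def
  proof (intro conjI ballI impI)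
    fix c :: "'a vec" assume c: "c \<in> carrier_vec (dim_col ?U)" and K: "?U *\<^sub>v c \<in> K"
    then have "vec ?k (\<lambda>i. c $ i) = c" by auto
    then have "lc n (\<lambda>i. c $ i) us \<in> K" using K lc_eq_mat_of_cols_mult_vec[OF us] by metis
    then have "\<forall>i<?k. c $ i = 0" using assms unfolding qbasis_def by blast
    then show "c = 0\<^sub>v (dim_col ?U)" using c by auto
  next
    fix u :: "'a vec" assume "u \<in> carrier_vec (dim_row ?U)"
    then obtain c where "u - lc n c us \<in> K" using assms unfolding qbasis_def by auto
    then show "\<exists>c\<in>carrier_vec (dim_col ?U). u - ?U *\<^sub>v c \<in> K"
      using lc_eq_mat_of_cols_mult_vec[OF us] by (intro bexI[of _ "vec ?k c"]) auto
  qed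
qed

definition mat_cong :: "'a::field vec set \<Rightarrow> 'a mat \<Rightarrow> 'a mat \<Rightarrow> bool" where
  "mat_cong K X Y \<longleftrightarrow> dim_row X = dim_row Y \<and> dim_col X = dim_col Y \<and>
     (\<forall>c\<in>carrier_vec (dim_col X). X *\<^sub>v c - Y *\<^sub>v c \<in> K)"

lemma mat_cong_carrier: "mat_cong K X Y \<Longrightarrow> X \<in> carrier_mat n k \<Longrightarrow> Y \<in> carrier_mat n k"
  unfolding mat_cong_def by auto

lemma mat_cong_colsI:
  fixes X Y :: "'a::field mat"
  assumes K: "lin_closed n K" and X: "X \<in> carrier_mat n k" and Y: "Y \<in> carrier_mat n k"
    and cols: "\<And>j. j < k \<Longrightarrow> col X j - col Y j \<in> K"
  shows "mat_cong K X Y"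
proof -
  have "X *\<^sub>v c - Y *\<^sub>v c \<in> K" if c: "c \<in> carrier_vec k" for c
  proof -
    have "col (X - Y) j = col X j - col Y j" if "j < k" for j
      using X Y that by (intro eq_vecI) auto
    then have "(X - Y) *\<^sub>v c \<in> K"
      using X Y cols by (intro lin_closed_mult_vec[OF K _ _ c]) auto
    then show ?thesis using X Y c by (simp add: minus_mult_distrib_mat_vec)
  qed
  then show ?thesis using X Y unfolding mat_cong_def by auto
qed

lemma mat_cong_refl:
  assumes K: "lin_closed n K" and X: "X \<in> carrier_mat n k"
  shows "mat_cong K X X"
proof -
  have "X *\<^sub>v c - X *\<^sub>v c \<in> K" if "c \<in> carrier_vec k" for c
  proof -
    have "X *\<^sub>v c - X *\<^sub>v c = 0\<^sub>v n" using X that by (intro eq_vecI) auto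
    then show ?thesis using lin_closed_zero[OF K] by simp
  qed
  then show ?thesis using X unfolding mat_cong_def by auto
qed

lemma mat_cong_sym:
  assumes K: "lin_closed n K" and X: "X \<in> carrier_mat n k" and XY: "mat_cong K X Y"
  shows "mat_cong K Y X"
proof -
  have Y: "Y \<in> carrier_mat n k" by (rule mat_cong_carrier[OF XY X])
  have "Y *\<^sub>v c - X *\<^sub>v c \<in> K" if c: "c \<in> carrier_vec k" for c
  proof -
    have "Y *\<^sub>v c - X *\<^sub>v c = 0\<^sub>v n - (X *\<^sub>v c - Y *\<^sub>v c)" using X Y c by (intro eq_vecI) auto
    then show ?thesis
      using lin_closed_diff[OF K lin_closed_zero[OF K]] XY c X unfolding mat_cong_def by auto
  qed
  then show ?thesis using X Y unfolding mat_cong_def by auto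
qed

lemma mat_cong_trans:
  assumes K: "lin_closed n K" and X: "X \<in> carrier_mat n k"
    and XY: "mat_cong K X Y" and YZ: "mat_cong K Y Z"
  shows "mat_cong K X Z"
proof -
  have Y: "Y \<in> carrier_mat n k" by (rule mat_cong_carrier[OF XY X])
  have Z: "Z \<in> carrier_mat n k" by (rule mat_cong_carrier[OF YZ Y])
  have "X *\<^sub>v c - Z *\<^sub>v c \<in> K" if c: "c \<in> carrier_vec k" for c
  proof -
    have "X *\<^sub>v c - Z *\<^sub>v c = (X *\<^sub>v c - Y *\<^sub>v c) + (Y *\<^sub>v c - Z *\<^sub>v c)"
      using X Y Z c by (intro eq_vecI) auto
    then show ?thesis using lin_closed_add[OF K] XY YZ c X Y unfolding mat_cong_def by auto
  qed
  then show ?thesis using X Z unfolding mat_cong_def by auto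
qed

lemma mat_cong_mult_right:
  assumes X: "X \<in> carrier_mat n k" and C: "C \<in> carrier_mat k l" and XY: "mat_cong K X Y"
  shows "mat_cong K (X * C) (Y * C)"
proof -
  have Y: "Y \<in> carrier_mat n k" by (rule mat_cong_carrier[OF XY X])
  have "(X * C) *\<^sub>v c - (Y * C) *\<^sub>v c \<in> K" if c: "c \<in> carrier_vec l" for c
  proof -
    have "(X * C) *\<^sub>v c - (Y * C) *\<^sub>v c = X *\<^sub>v (C *\<^sub>v c) - Y *\<^sub>v (C *\<^sub>v c)" using X Y C c by auto
    then show ?thesis using XY c C X unfolding mat_cong_def by auto
  qed
  then show ?thesis using X Y C unfolding mat_cong_def by auto
qed

lemma mat_cong_mult_left:
  assumes M: "M \<in> carrier_mat n' n" and X: "X \<in> carrier_mat n k" and XY: "mat_cong K X Y"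
    and KW: "\<And>x. x \<in> K \<Longrightarrow> M *\<^sub>v x \<in> W"
  shows "mat_cong W (M * X) (M * Y)"
proof -
  have Y: "Y \<in> carrier_mat n k" by (rule mat_cong_carrier[OF XY X])
  have "(M * X) *\<^sub>v c - (M * Y) *\<^sub>v c \<in> W" if c: "c \<in> carrier_vec k" for c
  proof -
    have "(M * X) *\<^sub>v c - (M * Y) *\<^sub>v c = M *\<^sub>v (X *\<^sub>v c - Y *\<^sub>v c)"
      using M X Y c by (auto simp: mult_minus_distrib_mat_vec[OF M])
    then show ?thesis using XY c X KW unfolding mat_cong_def by auto
  qed
  then show ?thesis using X Y M unfolding mat_cong_def by auto
qed

lemma quot_basis_cancel_left:
  assumes V: "V \<in> carrier_mat n l" and qV: "quot_basis K V"
    and X: "X \<in> carrier_mat l k" and Y: "Y \<in> carrier_mat l k"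
    and VXY: "mat_cong K (V * X) (V * Y)"
  shows "X = Y"
proof (rule eq_matI)
  fix i j assume ij: "i < dim_row Y" "j < dim_col Y"
  let ?c = "X *\<^sub>v unit_vec k j - Y *\<^sub>v unit_vec k j"
  have c: "?c \<in> carrier_vec l" using X Y by auto
  have "V *\<^sub>v ?c = (V * X) *\<^sub>v unit_vec k j - (V * Y) *\<^sub>v unit_vec k j"
    using V X Y by (auto simp: mult_minus_distrib_mat_vec[OF V])
  also have "\<dots> \<in> K" using VXY V X unfolding mat_cong_def by auto
  finally have "?c = 0\<^sub>v l" by (rule quot_basis_indep[OF qV V c])
  then have "?c $ i = 0" using ij Y by simp
  then show "X $$ (i, j) = Y $$ (i, j)" using ij X Y by auto
qed (use X Y in auto)

lemma quot_basis_coords: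
  fixes U U0 :: "'a::field mat"
  assumes K: "lin_closed n K" and qU0: "quot_basis K U0"
    and U0: "U0 \<in> carrier_mat n k0" and U: "U \<in> carrier_mat n k"
  obtains T where "T \<in> carrier_mat k0 k" "mat_cong K U (U0 * T)"
proof -
  have "\<forall>j<k. \<exists>c. c \<in> carrier_vec k0 \<and> col U j - U0 *\<^sub>v c \<in> K"
    using U by (metis quot_basis_span[OF qU0 U0] col_carrier_vec)
  then obtain cf where cf: "\<And>j. j < k \<Longrightarrow> cf j \<in> carrier_vec k0 \<and> col U j - U0 *\<^sub>v cf j \<in> K"
    by metis
  define T where "T = mat_of_cols k0 (map cf [0..<k])"
  have T: "T \<in> carrier_mat k0 k" unfolding T_def by auto
  have "col (U0 * T) j = U0 *\<^sub>v cf j" if "j < k" for j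
    using col_mult2[OF U0 T that] cf that unfolding T_def by auto
  then have "mat_cong K U (U0 * T)"
    using U U0 T cf by (intro mat_cong_colsI[OF K]) auto
  with T that show thesis by blast
qed

lemma quot_basis_change:
  fixes U U0 :: "'a::field mat"
  assumes K: "lin_closed n K" and qU: "quot_basis K U" and qU0: "quot_basis K U0"
    and U: "U \<in> carrier_mat n k" and U0: "U0 \<in> carrier_mat n k0"
  obtains T where "k = k0" "T \<in> carrier_mat k k" "invertible_mat T" "mat_cong K U (U0 * T)"
proof -
  have inverse: "T' * T = 1\<^sub>m k"
    if qU: "quot_basis K U" and U: "U \<in> carrier_mat n k" and U0: "U0 \<in> carrier_mat n k0"
      and T: "T \<in> carrier_mat k0 k" and T': "T' \<in> carrier_mat k k0"
      and UT: "mat_cong K U (U0 * T)" and UT': "mat_cong K U0 (U * T')"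
    for U U0 T T' k k0
  proof -
    have "mat_cong K U (U * T' * T)" by (rule mat_cong_trans[OF K U UT mat_cong_mult_right[OF U0 T UT']])
    then have "mat_cong K (U * (T' * T)) U"
      using U T T' by (intro mat_cong_sym[OF K U]) simp_all
    then have "mat_cong K (U * (T' * T)) (U * 1\<^sub>m k)" using U by simp
    then show ?thesis using T T' by (intro quot_basis_cancel_left[OF U qU]) auto
  qed
  obtain T where T: "T \<in> carrier_mat k0 k" and UT: "mat_cong K U (U0 * T)"
    using quot_basis_coords[OF K qU0 U0 U] .
  obtain T' where T': "T' \<in> carrier_mat k k0" and UT': "mat_cong K U0 (U * T')"
    using quot_basis_coords[OF K qU U U0] .
  have T'T: "T' * T = 1\<^sub>m k" by (rule inverse[OF qU U U0 T T' UT UT'])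
  have TT': "T * T' = 1\<^sub>m k0" by (rule inverse[OF qU0 U0 U T' T UT' UT])
  have kk: "k = k0"
    using left_inverse_imp_dim_le[OF T T' T'T] left_inverse_imp_dim_le[OF T' T TT'] by simp
  then have "invertible_mat T"
    using T T' TT' T'T unfolding invertible_mat_def inverts_mat_def by auto
  with kk T UT that show thesis by auto
qed

lemma quot_basis_mult:
  fixes U :: "'a::field mat"
  assumes R: "R \<in> carrier_mat n n" "invertible_mat R" and U: "U \<in> carrier_mat n k"
    and K: "K \<subseteq> carrier_vec n" and qU: "quot_basis K U"
  shows "quot_basis ((\<lambda>x. R *\<^sub>v x) ` K) (R * U)"
proof -
  obtain Ri where Ri: "Ri \<in> carrier_mat n n" "R * Ri = 1\<^sub>m n" "Ri * R = 1\<^sub>m n"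
    using invertible_matE[OF R] by blast
  have RU: "dim_row (R * U) = n" "dim_col (R * U) = k" using R(1) U by auto
  show ?thesis
    unfolding quot_basis_def RU
  proof (intro conjI ballI impI)
    fix c :: "'a vec" assume c: "c \<in> carrier_vec k" and RUc: "(R * U) *\<^sub>v c \<in> (\<lambda>x. R *\<^sub>v x) ` K"
    obtain x where eq: "(R * U) *\<^sub>v c = R *\<^sub>v x" and x: "x \<in> K" using RUc by (rule imageE)
    have Uc: "U *\<^sub>v c \<in> carrier_vec n" using U c by auto
    have "U *\<^sub>v c = Ri *\<^sub>v (R *\<^sub>v (U *\<^sub>v c))" using mult_mat_vec_cancel[OF R(1) Ri(1) Ri(3) Uc] by simp
    also have "\<dots> = Ri *\<^sub>v (R *\<^sub>v x)" using eq R(1) U c by simp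
    also have "\<dots> = x" using mult_mat_vec_cancel[OF R(1) Ri(1) Ri(3)] x K by auto
    finally show "c = 0\<^sub>v k" using quot_basis_indep[OF qU U c] x by simp
  next
    fix u :: "'a vec" assume u: "u \<in> carrier_vec n"
    obtain c where c: "c \<in> carrier_vec k" and cK: "Ri *\<^sub>v u - U *\<^sub>v c \<in> K"
      using quot_basis_span[OF qU U, of "Ri *\<^sub>v u"] Ri u by auto
    have "R *\<^sub>v (Ri *\<^sub>v u - U *\<^sub>v c) = R *\<^sub>v (Ri *\<^sub>v u) - R *\<^sub>v (U *\<^sub>v c)"
      using Ri U u c by (intro mult_minus_distrib_mat_vec[OF R(1)]) auto
    also have "\<dots> = u - (R * U) *\<^sub>v c"
      using mult_mat_vec_cancel[OF Ri(1) R(1) Ri(2) u] R(1) U c by simp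
    finally show "\<exists>c\<in>carrier_vec k. u - (R * U) *\<^sub>v c \<in> (\<lambda>x. R *\<^sub>v x) ` K"
      using c cK by (metis image_eqI)
  qed
qed

lemma quot_basis_mult_surj:
  fixes B :: "'a::field mat"
  assumes B: "B \<in> carrier_mat m n" and surj: "surj_mat B" and P: "P \<in> carrier_mat n k"
    and qP: "quot_basis {x \<in> carrier_vec n. B *\<^sub>v x \<in> W} P"
  shows "quot_basis W (B * P)"
  unfolding quot_basis_def carrier_matD[OF mult_carrier_mat[OF B P]]
proof (intro conjI ballI impI)
  fix c :: "'a vec" assume c: "c \<in> carrier_vec k" and "(B * P) *\<^sub>v c \<in> W"
  then have "P *\<^sub>v c \<in> {x \<in> carrier_vec n. B *\<^sub>v x \<in> W}" using B P by auto
  then show "c = 0\<^sub>v k" by (rule quot_basis_indep[OF qP P c])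
next
  fix v :: "'a vec" assume "v \<in> carrier_vec m"
  then obtain x where x: "x \<in> carrier_vec n" and Bx: "B *\<^sub>v x = v"
    using surj B unfolding surj_mat_def by auto
  obtain c where c: "c \<in> carrier_vec k" and "x - P *\<^sub>v c \<in> {x \<in> carrier_vec n. B *\<^sub>v x \<in> W}"
    using quot_basis_span[OF qP P x] .
  moreover have "B *\<^sub>v (x - P *\<^sub>v c) = v - (B * P) *\<^sub>v c"
    using B P x c Bx by (auto simp: mult_minus_distrib_mat_vec[OF B])
  ultimately show "\<exists>c\<in>carrier_vec k. v - (B * P) *\<^sub>v c \<in> W" by auto
qed

section \<open>Induced pairs\<close>

lemma induced_mat_imp_mat_cong:
  fixes M :: "'a::field mat"
  assumes W: "lin_closed m W" and M: "M \<in> carrier_mat m n"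
    and us: "set us \<subseteq> carrier_vec n" and vs: "set vs \<subseteq> carrier_vec m"
    and ind: "induced_mat m M W us vs M2"
  shows "mat_cong W (M * mat_of_cols n us) (mat_of_cols m vs * M2)"
proof -
  let ?U = "mat_of_cols n us" and ?V = "mat_of_cols m vs"
  have M2: "M2 \<in> carrier_mat (length vs) (length us)" using ind unfolding induced_mat_def by auto
  show ?thesis
  proof (rule mat_cong_colsI[OF W])
    fix j assume j: "j < length us"
    have "us ! j \<in> carrier_vec n" using us j by auto
    then have "col (M * ?U) j = M *\<^sub>v (us ! j)"
      using col_mult2[OF M mat_of_cols_carrier(1) j] j by simp
    moreover have "col (?V * M2) j = ?V *\<^sub>v vec (length vs) (\<lambda>i. M2 $$ (i,j))"
      using M2 j by (metis col_def col_mult2 mat_of_cols_carrier(1) carrier_matD)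
    ultimately have "col (M * ?U) j - col (?V * M2) j = M *\<^sub>v (us ! j) - lc m (\<lambda>i. M2 $$ (i,j)) vs"
      by (simp add: lc_eq_mat_of_cols_mult_vec[OF vs])
    then show "col (M * ?U) j - col (?V * M2) j \<in> W" using ind j unfolding induced_mat_def by auto
  qed (use M M2 in auto)
qed

text \<open>\<open>induced_pair m n A B U V A2 B2\<close>: the columns of U and V represent bases of
  \<open>F\<^sup>n / Ker B\<close> and \<open>F\<^sup>m / A (Ker B)\<close>, and (A2, B2) is the matrix pair, in these bases, of the
  maps between these quotients induced by A and B.\<close>

definition induced_pair ::
  "nat \<Rightarrow> nat \<Rightarrow> 'a::field mat \<Rightarrow> 'a mat \<Rightarrow> 'a mat \<Rightarrow> 'a mat \<Rightarrow> 'a mat \<Rightarrow> 'a mat \<Rightarrow> bool" where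
  "induced_pair m n A B U V A2 B2 \<longleftrightarrow> A \<in> carrier_mat m n \<and> B \<in> carrier_mat m n \<and>
     U \<in> carrier_mat n (dim_col U) \<and> V \<in> carrier_mat m (dim_col V) \<and>
     A2 \<in> carrier_mat (dim_col V) (dim_col U) \<and> B2 \<in> carrier_mat (dim_col V) (dim_col U) \<and>
     quot_basis (mat_kernel B) U \<and> quot_basis (ker_image A B) V \<and>
     mat_cong (ker_image A B) (A * U) (V * A2) \<and> mat_cong (ker_image A B) (B * U) (V * B2)"

lemma induced_pair_of_qbasis:
  fixes A B :: "'a::field mat"
  assumes A: "A \<in> carrier_mat m n" and B: "B \<in> carrier_mat m n"
    and us: "qbasis n (mat_kernel B) us" and vs: "qbasis m (ker_image A B) vs"
    and A2: "induced_mat m A (ker_image A B) us vs A2" and B2: "induced_mat m B (ker_image A B) us vs B2"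
  shows "induced_pair m n A B (mat_of_cols n us) (mat_of_cols m vs) A2 B2"
proof -
  have W: "lin_closed m (ker_image A B)" by (rule lin_closed_ker_image[OF A B])
  have "set us \<subseteq> carrier_vec n" "set vs \<subseteq> carrier_vec m" using us vs unfolding qbasis_def by auto
  then show ?thesis
    unfolding induced_pair_def
    using A B A2 B2 qbasis_imp_quot_basis[OF us] qbasis_imp_quot_basis[OF vs]
      induced_mat_imp_mat_cong[OF W A _ _ A2] induced_mat_imp_mat_cong[OF W B _ _ B2]
    by (auto simp: induced_mat_def)
qed

lemma induced_mat_change_basis:
  fixes M :: "'a::field mat"
  assumes W: "lin_closed m W" and K: "lin_closed n K" and M: "M \<in> carrier_mat m n"
    and U: "U \<in> carrier_mat n k" and U0: "U0 \<in> carrier_mat n k"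
    and V: "V \<in> carrier_mat m l" and V0: "V0 \<in> carrier_mat m l"
    and M2: "M2 \<in> carrier_mat l k" and M0: "M0 \<in> carrier_mat l k"
    and T: "T \<in> carrier_mat k k" and T': "T' \<in> carrier_mat l l"
    and qV0: "quot_basis W V0" and KW: "\<And>x. x \<in> K \<Longrightarrow> M *\<^sub>v x \<in> W"
    and UT: "mat_cong K U (U0 * T)" and VT': "mat_cong W V (V0 * T')"
    and MU: "mat_cong W (M * U) (V * M2)" and MU0: "mat_cong W (M * U0) (V0 * M0)"
  shows "M0 * T = T' * M2"
proof -
  have VMT: "V0 * (M0 * T) \<in> carrier_mat m k" using V0 M0 T by auto
  have "mat_cong W (V0 * M0) (M * U0)" using M U0 by (intro mat_cong_sym[OF W _ MU0]) auto
  then have "mat_cong W (V0 * M0 * T) (M * U0 * T)"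
    using V0 M0 by (intro mat_cong_mult_right[OF _ T]) auto
  then have "mat_cong W (V0 * (M0 * T)) (M * (U0 * T))"
    using assoc_mult_mat[OF V0 M0 T] assoc_mult_mat[OF M U0 T] by simp
  moreover have "mat_cong W (M * (U0 * T)) (M * U)"
    using U0 T by (intro mat_cong_mult_left[OF M _ mat_cong_sym[OF K U UT] KW]) auto
  ultimately have "mat_cong W (V0 * (M0 * T)) (M * U)" by (rule mat_cong_trans[OF W VMT])
  then have "mat_cong W (V0 * (M0 * T)) (V * M2)" by (rule mat_cong_trans[OF W VMT _ MU])
  moreover have "mat_cong W (V * M2) (V0 * (T' * M2))"
    using mat_cong_mult_right[OF V M2 VT'] assoc_mult_mat[OF V0 T' M2] by simp
  ultimately have "mat_cong W (V0 * (M0 * T)) (V0 * (T' * M2))" by (rule mat_cong_trans[OF W VMT])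
  then show ?thesis using M0 T T' M2 by (intro quot_basis_cancel_left[OF V0 qV0]) auto
qed

lemma induced_pair_unique:
  fixes A :: "'a::field mat"
  assumes d: "induced_pair m n A B U V A2 B2" and d0: "induced_pair m n A B U0 V0 A0 B0"
  shows "pair_equiv A2 B2 A0 B0"
proof -
  define k l k0 l0 where "k = dim_col U" and "l = dim_col V" and "k0 = dim_col U0" and "l0 = dim_col V0"
  let ?K = "mat_kernel B" and ?W = "ker_image A B"
  from d have A: "A \<in> carrier_mat m n" and B: "B \<in> carrier_mat m n" and U: "U \<in> carrier_mat n k"
    and V: "V \<in> carrier_mat m l" and A2: "A2 \<in> carrier_mat l k" and B2: "B2 \<in> carrier_mat l k"
    and qU: "quot_basis ?K U" and qV: "quot_basis ?W V"
    and AU: "mat_cong ?W (A * U) (V * A2)" and BU: "mat_cong ?W (B * U) (V * B2)"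
    unfolding induced_pair_def k_def l_def by auto
  from d0 have U0: "U0 \<in> carrier_mat n k0" and V0: "V0 \<in> carrier_mat m l0"
    and A0: "A0 \<in> carrier_mat l0 k0" and B0: "B0 \<in> carrier_mat l0 k0"
    and qU0: "quot_basis ?K U0" and qV0: "quot_basis ?W V0"
    and AU0: "mat_cong ?W (A * U0) (V0 * A0)" and BU0: "mat_cong ?W (B * U0) (V0 * B0)"
    unfolding induced_pair_def k0_def l0_def by auto
  have K: "lin_closed n ?K" by (rule lin_closed_mat_kernel[OF B])
  have W: "lin_closed m ?W" by (rule lin_closed_ker_image[OF A B])
  obtain T where kk: "k = k0" and T: "T \<in> carrier_mat k k" "invertible_mat T"
    and UT: "mat_cong ?K U (U0 * T)"
    using quot_basis_change[OF K qU qU0 U U0] by blast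
  obtain T' where ll: "l = l0" and T': "T' \<in> carrier_mat l l" "invertible_mat T'"
    and VT': "mat_cong ?W V (V0 * T')"
    using quot_basis_change[OF W qV qV0 V V0] by blast
  have AKW: "A *\<^sub>v x \<in> ?W" if "x \<in> ?K" for x
    using that unfolding ker_image_def by auto
  have BKW: "B *\<^sub>v x \<in> ?W" if "x \<in> ?K" for x
    using that lin_closed_zero[OF W] mat_kernelD[OF B] by auto
  note dims = U0[folded kk] V0[folded ll] A0[folded kk ll] B0[folded kk ll]
  have "A0 * T = T' * A2"
    using induced_mat_change_basis[OF W K A U _ V _ A2 _ T(1) T'(1) qV0 AKW UT VT' AU AU0] dims by blast
  moreover have "B0 * T = T' * B2"
    using induced_mat_change_basis[OF W K B U _ V _ B2 _ T(1) T'(1) qV0 BKW UT VT' BU BU0] dims by blast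
  moreover have "dim_row A2 = l" "dim_col A2 = k" using A2 by auto
  ultimately show ?thesis
    unfolding pair_equiv_def using A2 B2 dims T T'
    by (intro conjI exI[of _ T'] exI[of _ T]) simp_all
qed

lemma mat_kernel_equiv:
  fixes B :: "'a::field mat"
  assumes S: "S \<in> carrier_mat m m" "invertible_mat S" and R: "R \<in> carrier_mat n n" "invertible_mat R"
    and B: "B \<in> carrier_mat m n" and B': "B' \<in> carrier_mat m n" and SB: "S * B = B' * R"
  shows "mat_kernel B' = (\<lambda>x. R *\<^sub>v x) ` mat_kernel B"
proof
  obtain Si where Si: "Si \<in> carrier_mat m m" "Si * S = 1\<^sub>m m" using invertible_matE[OF S] by blast
  obtain Ri where Ri: "Ri \<in> carrier_mat n n" "R * Ri = 1\<^sub>m n" using invertible_matE[OF R] by blast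
  show "mat_kernel B' \<subseteq> (\<lambda>x. R *\<^sub>v x) ` mat_kernel B"
  proof
    fix y assume y: "y \<in> mat_kernel B'"
    then have yc: "y \<in> carrier_vec n" and "B' *\<^sub>v y = 0\<^sub>v m" using mat_kernelD[OF B'] by auto
    moreover have "R *\<^sub>v (Ri *\<^sub>v y) = y" by (rule mult_mat_vec_cancel[OF Ri(1) R(1) Ri(2) yc])
    ultimately have "S *\<^sub>v (B *\<^sub>v (Ri *\<^sub>v y)) = 0\<^sub>v m"
      using mult_mat_vec_equiv[OF S(1) B B' R(1) SB, of "Ri *\<^sub>v y"] Ri by auto
    then have "Si *\<^sub>v (S *\<^sub>v (B *\<^sub>v (Ri *\<^sub>v y))) = 0\<^sub>v m" using mult_mat_vec_zero[OF Si(1)] by simp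
    then have "B *\<^sub>v (Ri *\<^sub>v y) = 0\<^sub>v m"
      using mult_mat_vec_cancel[OF S(1) Si(1,2), of "B *\<^sub>v (Ri *\<^sub>v y)"] B Ri yc by auto
    then have "Ri *\<^sub>v y \<in> mat_kernel B" using B Ri yc by (auto intro: mat_kernelI)
    then show "y \<in> (\<lambda>x. R *\<^sub>v x) ` mat_kernel B"
      using \<open>R *\<^sub>v (Ri *\<^sub>v y) = y\<close> by (metis image_eqI)
  qed
  show "(\<lambda>x. R *\<^sub>v x) ` mat_kernel B \<subseteq> mat_kernel B'"
  proof
    fix y assume "y \<in> (\<lambda>x. R *\<^sub>v x) ` mat_kernel B"
    then obtain x where x: "x \<in> mat_kernel B" and y: "y = R *\<^sub>v x" by auto
    have xc: "x \<in> carrier_vec n" and Bx: "B *\<^sub>v x = 0\<^sub>v m" using mat_kernelD[OF B x] by auto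
    have "B' *\<^sub>v y = S *\<^sub>v (B *\<^sub>v x)" using mult_mat_vec_equiv[OF S(1) B B' R(1) SB xc] y by simp
    also have "\<dots> = 0\<^sub>v m" using Bx mult_mat_vec_zero[OF S(1)] by simp
    finally have "B' *\<^sub>v y = 0\<^sub>v m" .
    then show "y \<in> mat_kernel B'" using B' R(1) xc y by (auto intro: mat_kernelI)
  qed
qed

lemma ker_image_equiv:
  fixes A B :: "'a::field mat"
  assumes S: "S \<in> carrier_mat m m" "invertible_mat S" and R: "R \<in> carrier_mat n n" "invertible_mat R"
    and A: "A \<in> carrier_mat m n" and B: "B \<in> carrier_mat m n"
    and A': "A' \<in> carrier_mat m n" and B': "B' \<in> carrier_mat m n"
    and SA: "S * A = A' * R" and SB: "S * B = B' * R"
  shows "ker_image A' B' = (\<lambda>x. S *\<^sub>v x) ` ker_image A B"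
proof -
  have "ker_image A' B' = (\<lambda>x. A' *\<^sub>v (R *\<^sub>v x)) ` mat_kernel B"
    unfolding ker_image_def mat_kernel_equiv[OF S R B B' SB] image_image ..
  also have "\<dots> = (\<lambda>x. S *\<^sub>v (A *\<^sub>v x)) ` mat_kernel B"
    using mult_mat_vec_equiv[OF S(1) A A' R(1) SA] mat_kernelD(1)[OF B] by (auto intro!: image_cong)
  finally show ?thesis unfolding ker_image_def image_image .
qed

lemma induced_pair_equiv:
  fixes A :: "'a::field mat"
  assumes d: "induced_pair m n A B U V A2 B2"
   and S: "S \<in> carrier_mat m m" "invertible_mat S" and R: "R \<in> carrier_mat n n" "invertible_mat R"
   and A': "A' \<in> carrier_mat m n" and B': "B' \<in> carrier_mat m n"
   and SA: "S * A = A' * R" and SB: "S * B = B' * R"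
  shows "induced_pair m n A' B' (R * U) (S * V) A2 B2"
proof -
  define k l where "k = dim_col U" and "l = dim_col V"
  let ?W = "ker_image A B" and ?W' = "ker_image A' B'"
  from d have A: "A \<in> carrier_mat m n" and B: "B \<in> carrier_mat m n" and U: "U \<in> carrier_mat n k"
    and V: "V \<in> carrier_mat m l" and A2: "A2 \<in> carrier_mat l k" and B2: "B2 \<in> carrier_mat l k"
    and qU: "quot_basis (mat_kernel B) U" and qV: "quot_basis ?W V"
    and AU: "mat_cong ?W (A * U) (V * A2)" and BU: "mat_cong ?W (B * U) (V * B2)"
    unfolding induced_pair_def k_def l_def by auto
  have W': "?W' = (\<lambda>x. S *\<^sub>v x) ` ?W" by (rule ker_image_equiv[OF S R A B A' B' SA SB])
  have qU': "quot_basis (mat_kernel B') (R * U)"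
    unfolding mat_kernel_equiv[OF S R B B' SB]
    by (rule quot_basis_mult[OF R U mat_kernel_carrier[OF B] qU])
  have qV': "quot_basis ?W' (S * V)"
    unfolding W' using lin_closed_ker_image[OF A B]
    by (intro quot_basis_mult[OF S V _ qV]) (auto simp: lin_closed_def)
  have cong: "mat_cong ?W' (M' * (R * U)) (S * V * M2)"
    if M: "M \<in> carrier_mat m n" and SM: "S * M = M' * R" and MU: "mat_cong ?W (M * U) (V * M2)"
      and M': "M' \<in> carrier_mat m n" and M2: "M2 \<in> carrier_mat l k" for M M' M2
  proof -
    have "M' * (R * U) = S * (M * U)"
      using assoc_mult_mat[OF M' R(1) U] assoc_mult_mat[OF S(1) M U] SM by simp
    moreover have "S * V * M2 = S * (V * M2)" using S(1) V M2 by auto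
    moreover have "M * U \<in> carrier_mat m k" using M U by auto
    then have "mat_cong ?W' (S * (M * U)) (S * (V * M2))"
      unfolding W' by (rule mat_cong_mult_left[OF S(1) _ MU]) blast
    ultimately show ?thesis by simp
  qed
  have RU: "R * U \<in> carrier_mat n k" and SV: "S * V \<in> carrier_mat m l" using R(1) U S(1) V by auto
  then have "dim_col (R * U) = k" "dim_col (S * V) = l" by auto
  then show ?thesis
    unfolding induced_pair_def
    using A' B' RU SV A2 B2 qU' qV' cong[OF A SA AU A' A2] cong[OF B SB BU B' B2] by simp
qed

section \<open>Direct sums\<close>

lemma vec_first_append: "x \<in> carrier_vec n \<Longrightarrow> vec_first (x @\<^sub>v y) n = x"
  by (intro eq_vecI) (auto simp: vec_first_def)

lemma vec_last_append: "x \<in> carrier_vec n \<Longrightarrow> y \<in> carrier_vec n' \<Longrightarrow> vec_last (x @\<^sub>v y) n' = y"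
  by (intro eq_vecI) (auto simp: vec_last_def)

lemma zero_vec_append: "0\<^sub>v (n + n') = 0\<^sub>v n @\<^sub>v 0\<^sub>v n'"
  by (intro eq_vecI) auto

lemma append_vec_minus:
  "x \<in> carrier_vec n \<Longrightarrow> x' \<in> carrier_vec n \<Longrightarrow> y \<in> carrier_vec n' \<Longrightarrow> y' \<in> carrier_vec n'
   \<Longrightarrow> (x @\<^sub>v y) - (x' @\<^sub>v y') = (x - x') @\<^sub>v (y - y')"
  by (intro eq_vecI) auto

definition block_set :: "nat \<Rightarrow> nat \<Rightarrow> 'a::field vec set \<Rightarrow> 'a vec set \<Rightarrow> 'a vec set" where
  "block_set n n' K K' = {x \<in> carrier_vec (n + n'). vec_first x n \<in> K \<and> vec_last x n' \<in> K'}"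

lemma append_in_block_set_iff:
  "x \<in> carrier_vec n \<Longrightarrow> y \<in> carrier_vec n' \<Longrightarrow> x @\<^sub>v y \<in> block_set n n' K K' \<longleftrightarrow> x \<in> K \<and> y \<in> K'"
  unfolding block_set_def by (auto simp: vec_first_append vec_last_append)

lemma dsum_carrier:
  "A \<in> carrier_mat m n \<Longrightarrow> X \<in> carrier_mat m' n' \<Longrightarrow> dsum A X \<in> carrier_mat (m + m') (n + n')"
  unfolding dsum_def by (rule four_block_carrier_mat)

lemma dsum_mult_append_vec:
  fixes A X :: "'a::field mat"
  assumes A: "A \<in> carrier_mat m n" and X: "X \<in> carrier_mat m' n'"
    and x: "x \<in> carrier_vec n" and y: "y \<in> carrier_vec n'"
  shows "dsum A X *\<^sub>v (x @\<^sub>v y) = (A *\<^sub>v x) @\<^sub>v (X *\<^sub>v y)"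
  unfolding dsum_def using A X x y zero_mat_mult_vec[OF x] zero_mat_mult_vec[OF y]
  by (subst four_block_mat_mult_vec[OF A _ _ X x y]) auto

lemma dsum_mult_vec:
  fixes A X :: "'a::field mat"
  assumes A: "A \<in> carrier_mat m n" and X: "X \<in> carrier_mat m' n'" and x: "x \<in> carrier_vec (n + n')"
  shows "dsum A X *\<^sub>v x = (A *\<^sub>v vec_first x n) @\<^sub>v (X *\<^sub>v vec_last x n')"
  using dsum_mult_append_vec[OF A X vec_first_carrier vec_last_carrier, of x x] x by simp

lemma dsum_mult:
  fixes A X :: "'a::field mat"
  assumes A: "A \<in> carrier_mat m n" and X: "X \<in> carrier_mat m' n'"
    and U: "U \<in> carrier_mat n k" and U': "U' \<in> carrier_mat n' k'"
  shows "dsum A X * dsum U U' = dsum (A * U) (X * U')"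
  unfolding dsum_def using A X U U'
  by (subst mult_four_block_mat[of _ m n _ n' _ m' _ _ k _ k']) auto

lemma dsum_empty_right: "A \<in> carrier_mat m n \<Longrightarrow> X \<in> carrier_mat 0 0 \<Longrightarrow> dsum A X = A"
  unfolding dsum_def by (intro eq_matI) auto

lemma mat_kernel_dsum:
  fixes B Y :: "'a::field mat"
  assumes B: "B \<in> carrier_mat m n" and Y: "Y \<in> carrier_mat m' n'"
  shows "mat_kernel (dsum B Y) = block_set n n' (mat_kernel B) (mat_kernel Y)"
proof -
  have "dsum B Y *\<^sub>v x = 0\<^sub>v (m + m') \<longleftrightarrow>
      B *\<^sub>v vec_first x n = 0\<^sub>v m \<and> Y *\<^sub>v vec_last x n' = 0\<^sub>v m'"
    if x: "x \<in> carrier_vec (n + n')" for x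
  proof -
    have "(0\<^sub>v (m + m') :: 'a vec) = 0\<^sub>v m @\<^sub>v 0\<^sub>v m'" by auto
    then show ?thesis
      using dsum_mult_vec[OF B Y x] B by (simp add: append_vec_eq[of _ m])
  qed
  then show ?thesis
    using dsum_carrier[OF B Y] B Y unfolding mat_kernel_def block_set_def by auto
qed

lemma ker_image_dsum:
  fixes A B X Y :: "'a::field mat"
  assumes A: "A \<in> carrier_mat m n" and B: "B \<in> carrier_mat m0 n"
    and X: "X \<in> carrier_mat m' n'" and Y: "Y \<in> carrier_mat m0' n'"
  shows "ker_image (dsum A X) (dsum B Y) = block_set m m' (ker_image A B) (ker_image X Y)"
proof (intro equalityI subsetI)
  note K = mat_kernel_dsum[OF B Y]
  fix w assume "w \<in> ker_image (dsum A X) (dsum B Y)"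
  then obtain x where x: "x \<in> mat_kernel (dsum B Y)" and w: "w = dsum A X *\<^sub>v x"
    unfolding ker_image_def by auto
  have "x \<in> carrier_vec (n + n')" "vec_first x n \<in> mat_kernel B" "vec_last x n' \<in> mat_kernel Y"
    using x unfolding K block_set_def by auto
  then show "w \<in> block_set m m' (ker_image A B) (ker_image X Y)"
    using w dsum_mult_vec[OF A X] A X unfolding ker_image_def
    by (auto simp: append_in_block_set_iff)
next
  note K = mat_kernel_dsum[OF B Y]
  fix w assume "w \<in> block_set m m' (ker_image A B) (ker_image X Y)"
  then have w: "w \<in> carrier_vec (m + m')" and "vec_first w m \<in> ker_image A B"
    and "vec_last w m' \<in> ker_image X Y" unfolding block_set_def by auto
  then obtain a b where a: "a \<in> mat_kernel B" "vec_first w m = A *\<^sub>v a"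
    and b: "b \<in> mat_kernel Y" "vec_last w m' = X *\<^sub>v b" unfolding ker_image_def by auto
  have ab: "a \<in> carrier_vec n" "b \<in> carrier_vec n'" using a b B Y mat_kernelD by blast+
  then have "a @\<^sub>v b \<in> mat_kernel (dsum B Y)" using a b unfolding K by (simp add: append_in_block_set_iff)
  moreover have "dsum A X *\<^sub>v (a @\<^sub>v b) = w"
    using dsum_mult_append_vec[OF A X ab] a b w by (metis vec_first_last_append)
  ultimately show "w \<in> ker_image (dsum A X) (dsum B Y)" unfolding ker_image_def by (metis image_eqI)
qed

lemma quot_basis_dsum:
  fixes U U' :: "'a::field mat"
  assumes U: "U \<in> carrier_mat n k" and U': "U' \<in> carrier_mat n' k'"
    and qU: "quot_basis K U" and qU': "quot_basis K' U'"
  shows "quot_basis (block_set n n' K K') (dsum U U')"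
proof -
  have UU: "dim_row (dsum U U') = n + n'" "dim_col (dsum U U') = k + k'"
    using dsum_carrier[OF U U'] by auto
  show ?thesis unfolding quot_basis_def UU
  proof (intro conjI ballI impI)
    fix c :: "'a vec" assume c: "c \<in> carrier_vec (k + k')"
      and "dsum U U' *\<^sub>v c \<in> block_set n n' K K'"
    then have "U *\<^sub>v vec_first c k \<in> K" "U' *\<^sub>v vec_last c k' \<in> K'"
      using dsum_mult_vec[OF U U' c] U U' by (auto simp: append_in_block_set_iff)
    then have "vec_first c k = 0\<^sub>v k" "vec_last c k' = 0\<^sub>v k'"
      using quot_basis_indep[OF qU U] quot_basis_indep[OF qU' U'] by auto
    then show "c = 0\<^sub>v (k + k')" using vec_first_last_append[OF c] by (simp add: zero_vec_append)
  next
    fix u :: "'a vec" assume u: "u \<in> carrier_vec (n + n')"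
    obtain c1 where c1: "c1 \<in> carrier_vec k" "vec_first u n - U *\<^sub>v c1 \<in> K"
      using quot_basis_span[OF qU U vec_first_carrier] by blast
    obtain c2 where c2: "c2 \<in> carrier_vec k'" "vec_last u n' - U' *\<^sub>v c2 \<in> K'"
      using quot_basis_span[OF qU' U' vec_last_carrier] by blast
    have "u - dsum U U' *\<^sub>v (c1 @\<^sub>v c2) =
        (vec_first u n @\<^sub>v vec_last u n') - ((U *\<^sub>v c1) @\<^sub>v (U' *\<^sub>v c2))"
      unfolding dsum_mult_append_vec[OF U U' c1(1) c2(1)] vec_first_last_append[OF u] ..
    also have "\<dots> = (vec_first u n - U *\<^sub>v c1) @\<^sub>v (vec_last u n' - U' *\<^sub>v c2)"
      using U U' c1 c2 by (intro append_vec_minus[of _ n _ _ n']) auto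
    finally show "\<exists>c\<in>carrier_vec (k + k'). u - dsum U U' *\<^sub>v c \<in> block_set n n' K K'"
      using c1 c2 U U' by (intro bexI[of _ "c1 @\<^sub>v c2"]) (auto simp: append_in_block_set_iff)
  qed
qed

lemma mat_cong_dsum:
  fixes P P' :: "'a::field mat"
  assumes P: "P \<in> carrier_mat n k" and P': "P' \<in> carrier_mat n' k'"
    and PQ: "mat_cong K P Q" and PQ': "mat_cong K' P' Q'"
  shows "mat_cong (block_set n n' K K') (dsum P P') (dsum Q Q')"
proof -
  have Q: "Q \<in> carrier_mat n k" and Q': "Q' \<in> carrier_mat n' k'"
    using mat_cong_carrier[OF PQ P] mat_cong_carrier[OF PQ' P'] .
  have "dsum P P' *\<^sub>v c - dsum Q Q' *\<^sub>v c \<in> block_set n n' K K'" if c: "c \<in> carrier_vec (k + k')" for c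
  proof -
    have "dsum P P' *\<^sub>v c - dsum Q Q' *\<^sub>v c =
        (P *\<^sub>v vec_first c k - Q *\<^sub>v vec_first c k) @\<^sub>v (P' *\<^sub>v vec_last c k' - Q' *\<^sub>v vec_last c k')"
      unfolding dsum_mult_vec[OF P P' c] dsum_mult_vec[OF Q Q' c]
      using P Q P' Q' by (intro append_vec_minus[of _ n _ _ n']) auto
    moreover have "P *\<^sub>v vec_first c k - Q *\<^sub>v vec_first c k \<in> K"
      "P' *\<^sub>v vec_last c k' - Q' *\<^sub>v vec_last c k' \<in> K'"
      using PQ PQ' P P' unfolding mat_cong_def by auto
    ultimately show ?thesis using P Q P' Q' by (simp add: append_in_block_set_iff)
  qed
  then show ?thesis using dsum_carrier[OF P P'] dsum_carrier[OF Q Q'] unfolding mat_cong_def by auto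
qed

lemma induced_pair_dsum:
  fixes A X :: "'a::field mat"
  assumes d: "induced_pair m n A B U V A2 B2" and d': "induced_pair m' n' X Y U' V' X2 Y2"
  shows "induced_pair (m + m') (n + n') (dsum A X) (dsum B Y) (dsum U U') (dsum V V')
           (dsum A2 X2) (dsum B2 Y2)"
proof -
  define k l k' l' where "k = dim_col U" and "l = dim_col V" and "k' = dim_col U'" and "l' = dim_col V'"
  from d have A: "A \<in> carrier_mat m n" and B: "B \<in> carrier_mat m n" and U: "U \<in> carrier_mat n k"
    and V: "V \<in> carrier_mat m l" and A2: "A2 \<in> carrier_mat l k" and B2: "B2 \<in> carrier_mat l k"
    and qU: "quot_basis (mat_kernel B) U" and qV: "quot_basis (ker_image A B) V"
    and AU: "mat_cong (ker_image A B) (A * U) (V * A2)"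
    and BU: "mat_cong (ker_image A B) (B * U) (V * B2)"
    unfolding induced_pair_def k_def l_def by auto
  from d' have X: "X \<in> carrier_mat m' n'" and Y: "Y \<in> carrier_mat m' n'" and U': "U' \<in> carrier_mat n' k'"
    and V': "V' \<in> carrier_mat m' l'" and X2: "X2 \<in> carrier_mat l' k'" and Y2: "Y2 \<in> carrier_mat l' k'"
    and qU': "quot_basis (mat_kernel Y) U'" and qV': "quot_basis (ker_image X Y) V'"
    and XU: "mat_cong (ker_image X Y) (X * U') (V' * X2)"
    and YU: "mat_cong (ker_image X Y) (Y * U') (V' * Y2)"
    unfolding induced_pair_def k'_def l'_def by auto
  note K = mat_kernel_dsum[OF B Y] and W = ker_image_dsum[OF A B X Y]
  have "quot_basis (mat_kernel (dsum B Y)) (dsum U U')"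
    unfolding K by (rule quot_basis_dsum[OF U U' qU qU'])
  moreover have "quot_basis (ker_image (dsum A X) (dsum B Y)) (dsum V V')"
    unfolding W by (rule quot_basis_dsum[OF V V' qV qV'])
  moreover have "mat_cong (ker_image (dsum A X) (dsum B Y)) (dsum A X * dsum U U') (dsum V V' * dsum A2 X2)"
    unfolding W dsum_mult[OF A X U U'] dsum_mult[OF V V' A2 X2]
    using A U X U' by (intro mat_cong_dsum[OF _ _ AU XU]) auto
  moreover have "mat_cong (ker_image (dsum A X) (dsum B Y)) (dsum B Y * dsum U U') (dsum V V' * dsum B2 Y2)"
    unfolding W dsum_mult[OF B Y U U'] dsum_mult[OF V V' B2 Y2]
    using B U Y U' by (intro mat_cong_dsum[OF _ _ BU YU]) auto
  moreover have "dsum A X \<in> carrier_mat (m + m') (n + n')" "dsum B Y \<in> carrier_mat (m + m') (n + n')"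
    "dsum U U' \<in> carrier_mat (n + n') (k + k')" "dsum V V' \<in> carrier_mat (m + m') (l + l')"
    "dsum A2 X2 \<in> carrier_mat (l + l') (k + k')" "dsum B2 Y2 \<in> carrier_mat (l + l') (k + k')"
    using dsum_carrier A X B Y U U' V V' A2 X2 B2 Y2 by blast+
  ultimately show ?thesis unfolding induced_pair_def by simp
qed

section \<open>The summands of a regularizing decomposition\<close>

fun blk_rows :: "blk \<Rightarrow> nat" where
  "blk_rows (IJ k) = k" | "blk_rows (JI k) = k" | "blk_rows (LR k) = k - 1" | "blk_rows (LRT k) = k"

fun blk_cols :: "blk \<Rightarrow> nat" where
  "blk_cols (IJ k) = k" | "blk_cols (JI k) = k" | "blk_cols (LR k) = k" | "blk_cols (LRT k) = k - 1"

lemma LR_blk_dim [simp]: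
  "dim_row (Lblk k) = k - 1" "dim_col (Lblk k) = k" "dim_row (Rblk k) = k - 1" "dim_col (Rblk k) = k"
  unfolding Lblk_def Rblk_def by auto

lemma Lblk_carrier: "Lblk k \<in> carrier_mat (k - 1) k" and Rblk_carrier: "Rblk k \<in> carrier_mat (k - 1) k"
  by auto

lemma blk_pair_carrier:
  "fst (blk_pair b :: 'a::field mat \<times> 'a mat) \<in> carrier_mat (blk_rows b) (blk_cols b)"
  "snd (blk_pair b :: 'a::field mat \<times> 'a mat) \<in> carrier_mat (blk_rows b) (blk_cols b)"
  by (cases b; simp add: Jblk_def Lblk_def Rblk_def)+

lemma decomp_pair_snoc:
  "fst (decomp_pair r D (bs @ [b])) = dsum (fst (decomp_pair r D bs)) (fst (blk_pair b))"
  "snd (decomp_pair r D (bs @ [b])) = dsum (snd (decomp_pair r D bs)) (snd (blk_pair b))"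
  unfolding decomp_pair_def dsum_pair_def by simp_all

lemma decomp_pair_carrier:
  fixes D :: "'a::field mat"
  assumes D: "D \<in> carrier_mat r r"
  shows "fst (decomp_pair r D bs) \<in> carrier_mat (r + sum_list (map blk_rows bs)) (r + sum_list (map blk_cols bs))"
    "snd (decomp_pair r D bs) \<in> carrier_mat (r + sum_list (map blk_rows bs)) (r + sum_list (map blk_cols bs))"
proof (induction bs rule: rev_induct)
  case Nil
  { case 1 show ?case by (simp add: decomp_pair_def) }
  { case 2 show ?case using D by (simp add: decomp_pair_def) }
next
  case (snoc b bs)
  { case 1 show ?case
      unfolding decomp_pair_snoc using dsum_carrier[OF snoc.IH(1) blk_pair_carrier(1)]
      by (simp add: add.assoc) }
  { case 2 show ?case
      unfolding decomp_pair_snoc using dsum_carrier[OF snoc.IH(2) blk_pair_carrier(2)]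
      by (simp add: add.assoc) }
qed

text \<open>\<open>shrink_blk (LR 1) = LR 0\<close>, whose blocks are \<open>0 \<times> 0\<close> (the truncated \<open>k - 1\<close>), so it
  vanishes from the direct sum; this lets \<open>map shrink_blk\<close> treat all blocks uniformly.\<close>

lemma decomp_pair_remove_empty:
  fixes D :: "'a::field mat"
  assumes D: "D \<in> carrier_mat r r"
  shows "decomp_pair r D (filter (\<lambda>b. b \<noteq> LR 0) bs) = decomp_pair r D bs"
proof (induction bs rule: rev_induct)
  case (snoc b bs)
  show ?case
  proof (cases "b = LR 0")
    case True
    have "(Lblk 0 :: 'a mat) \<in> carrier_mat 0 0" "(Rblk 0 :: 'a mat) \<in> carrier_mat 0 0" by auto
    then show ?thesis
      using True snoc dsum_empty_right[OF decomp_pair_carrier(1)[OF D]]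
        dsum_empty_right[OF decomp_pair_carrier(2)[OF D]]
      by (simp add: prod_eq_iff decomp_pair_snoc)
  next
    case False
    then show ?thesis using snoc by (simp add: prod_eq_iff decomp_pair_snoc)
  qed
qed simp

lemma zero_row_not_surj_mat:
  fixes M :: "'a::field mat"
  assumes M: "M \<in> carrier_mat m n" and i: "i < m" and zero: "\<And>j. j < n \<Longrightarrow> M $$ (i,j) = 0"
  shows "\<not> surj_mat M"
proof
  assume "surj_mat M"
  then obtain x where x: "x \<in> carrier_vec n" and "M *\<^sub>v x = unit_vec m i"
    using M unfolding surj_mat_def by fastforce
  moreover have "(M *\<^sub>v x) $ i = 0"
    using M x i zero by (auto simp: scalar_prod_def intro!: sum.neutral)
  ultimately show False using i by simp
qed

lemma surj_mat_dsumD: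
  fixes A X :: "'a::field mat"
  assumes A: "A \<in> carrier_mat m n" and X: "X \<in> carrier_mat m' n'" and surj: "surj_mat (dsum A X)"
  shows "surj_mat A" "surj_mat X"
proof -
  have image: "\<exists>x\<in>carrier_vec (n + n'). (A *\<^sub>v vec_first x n) @\<^sub>v (X *\<^sub>v vec_last x n') = y"
    if "y \<in> carrier_vec (m + m')" for y
    using surj that dsum_carrier[OF A X] dsum_mult_vec[OF A X] unfolding surj_mat_def by fastforce
  show "surj_mat A" unfolding surj_mat_def
  proof
    fix y :: "'a vec" assume y: "y \<in> carrier_vec (dim_row A)"
    obtain x where "(A *\<^sub>v vec_first x n) @\<^sub>v (X *\<^sub>v vec_last x n') = y @\<^sub>v 0\<^sub>v m'"
      using image[of "y @\<^sub>v 0\<^sub>v m'"] y A by auto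
    then have "A *\<^sub>v vec_first x n = y" using A y by (subst (asm) append_vec_eq[of _ m]) auto
    then show "\<exists>x\<in>carrier_vec (dim_col A). A *\<^sub>v x = y" using A by auto
  qed
  show "surj_mat X" unfolding surj_mat_def
  proof
    fix y :: "'a vec" assume y: "y \<in> carrier_vec (dim_row X)"
    obtain x where "(A *\<^sub>v vec_first x n) @\<^sub>v (X *\<^sub>v vec_last x n') = 0\<^sub>v m @\<^sub>v y"
      using image[of "0\<^sub>v m @\<^sub>v y"] y X by auto
    then have "X *\<^sub>v vec_last x n' = y" using A y by (subst (asm) append_vec_eq[of _ m]) auto
    then show "\<exists>x\<in>carrier_vec (dim_col X). X *\<^sub>v x = y" using X by auto
  qed
qed

lemma surj_blk_pair_imp_LR:
  assumes "1 \<le> blk_size b"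
    and "surj_mat (fst (blk_pair b :: 'a::field mat \<times> 'a mat))" "surj_mat (snd (blk_pair b :: 'a mat \<times> 'a mat))"
  shows "\<exists>k. b = LR k"
proof (cases b)
  case (IJ k)
  have "\<not> surj_mat (Jblk k :: 'a mat)"
    using assms(1) IJ by (intro zero_row_not_surj_mat[of _ k k 0]) (auto simp: Jblk_def)
  then show ?thesis using assms(3) IJ by simp
next
  case (JI k)
  have "\<not> surj_mat (Jblk k :: 'a mat)"
    using assms(1) JI by (intro zero_row_not_surj_mat[of _ k k 0]) (auto simp: Jblk_def)
  then show ?thesis using assms(2) JI by simp
next
  case (LRT k)
  have "\<not> surj_mat (transpose_mat (Lblk k) :: 'a mat)"
    using assms(1) LRT by (intro zero_row_not_surj_mat[of _ k "k - 1" "k - 1"]) (auto simp: Lblk_def)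
  then show ?thesis using assms(2) LRT by simp
qed simp

lemma surj_decomp_pair_imp_LR:
  fixes D :: "'a::field mat"
  assumes D: "D \<in> carrier_mat r r" and sizes: "\<forall>b\<in>set bs. 1 \<le> blk_size b"
    and surj: "surj_mat (fst (decomp_pair r D bs))" "surj_mat (snd (decomp_pair r D bs))"
  shows "\<forall>b\<in>set bs. \<exists>k. b = LR k"
  using sizes surj
proof (induction bs rule: rev_induct)
  case (snoc b bs)
  note dsum_surj = surj_mat_dsumD[OF decomp_pair_carrier(1)[OF D] blk_pair_carrier(1)]
    surj_mat_dsumD[OF decomp_pair_carrier(2)[OF D] blk_pair_carrier(2)]
  have "surj_mat (fst (decomp_pair r D bs))" "surj_mat (fst (blk_pair b) :: 'a mat)"
    "surj_mat (snd (decomp_pair r D bs))" "surj_mat (snd (blk_pair b) :: 'a mat)"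
    using snoc.prems(2,3) dsum_surj unfolding decomp_pair_snoc by blast+
  then show ?case using snoc surj_blk_pair_imp_LR[of b] by auto
qed simp

lemma surj_mat_equiv:
  fixes A A' :: "'a::field mat"
  assumes surj: "surj_mat A" and A: "A \<in> carrier_mat m n" and A': "A' \<in> carrier_mat m n"
    and S: "S \<in> carrier_mat m m" "invertible_mat S" and R: "R \<in> carrier_mat n n"
    and SA: "S * A = A' * R"
  shows "surj_mat A'"
  unfolding surj_mat_def
proof
  fix y :: "'a vec" assume "y \<in> carrier_vec (dim_row A')"
  then have y: "y \<in> carrier_vec m" using A' by simp
  obtain Si where Si: "Si \<in> carrier_mat m m" "S * Si = 1\<^sub>m m" using invertible_matE[OF S] by blast
  obtain x where x: "x \<in> carrier_vec n" "A *\<^sub>v x = Si *\<^sub>v y"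
    using surj A Si y unfolding surj_mat_def by fastforce
  have "A' *\<^sub>v (R *\<^sub>v x) = S *\<^sub>v (A *\<^sub>v x)"
    using mult_mat_vec_equiv[OF S(1) A A' R SA x(1)] by simp
  also have "\<dots> = y" using x(2) mult_mat_vec_cancel[OF Si(1) S(1) Si(2) y] by simp
  finally show "\<exists>x\<in>carrier_vec (dim_col A'). A' *\<^sub>v x = y" using R x A' by (intro bexI[of _ "R *\<^sub>v x"]) auto
qed

lemma reg_decomp_surj_imp_LR:
  fixes A B :: "'a::field mat"
  assumes dec: "reg_decomp A B r D bs" and surjA: "surj_mat A" and surjB: "surj_mat B"
  shows "\<forall>b\<in>set bs. \<exists>k\<ge>1. b = LR k"
proof -
  let ?A' = "fst (decomp_pair r D bs)" and ?B' = "snd (decomp_pair r D bs)"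
  let ?m = "dim_row A" and ?n = "dim_col A"
  have A: "A \<in> carrier_mat ?m ?n" by auto
  from dec have D: "D \<in> carrier_mat r r" and sizes: "\<forall>b\<in>set bs. 1 \<le> blk_size b"
    and "pair_equiv A B ?A' ?B'" unfolding reg_decomp_def by auto
  then obtain S R where B: "B \<in> carrier_mat ?m ?n"
    and A': "?A' \<in> carrier_mat ?m ?n" and B': "?B' \<in> carrier_mat ?m ?n"
    and S: "S \<in> carrier_mat ?m ?m" "invertible_mat S" and R: "R \<in> carrier_mat ?n ?n"
    and SA: "S * A = ?A' * R" and SB: "S * B = ?B' * R"
    unfolding pair_equiv_def by auto
  have "\<forall>b\<in>set bs. \<exists>k. b = LR k"
    using surj_decomp_pair_imp_LR[OF D sizes] surj_mat_equiv[OF surjA A A' S R SA]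
      surj_mat_equiv[OF surjB B B' S R SB] by blast
  then show ?thesis using sizes by fastforce
qed

lemma sum_if_eq_mult:
  "t < (n::nat) \<Longrightarrow> (\<Sum>j = 0..<n. (if j = t then 1 else 0) * (f j :: 'a::field)) = f t"
  by (simp add: if_distrib[of "\<lambda>c. c * _"] cong: if_cong)

lemma Lblk_mult_vec_nth:
  "(c :: 'a::field vec) \<in> carrier_vec k \<Longrightarrow> i < k - 1 \<Longrightarrow> (Lblk k *\<^sub>v c) $ i = c $ i"
  unfolding Lblk_def by (auto simp: scalar_prod_def sum_if_eq_mult)

lemma Rblk_mult_vec_nth:
  "(c :: 'a::field vec) \<in> carrier_vec k \<Longrightarrow> i < k - 1 \<Longrightarrow> (Rblk k *\<^sub>v c) $ i = c $ Suc i"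
  unfolding Rblk_def by (auto simp: scalar_prod_def sum_if_eq_mult)

definition first_axis :: "nat \<Rightarrow> 'a::field vec set" where
  "first_axis n = {x \<in> carrier_vec n. \<forall>i. 0 < i \<and> i < n \<longrightarrow> x $ i = 0}"

text \<open>The columns \<open>e\<^sub>1, \<dots>, e\<^sub>n\<^sub>-\<^sub>1\<close> of \<open>shift_mat n\<close> form a basis of \<open>F\<^sup>n\<close> modulo the first axis;
  they serve as the quotient bases for the blocks \<open>(L\<^sub>k, R\<^sub>k)\<close>.\<close>

definition shift_mat :: "nat \<Rightarrow> 'a::field mat" where
  "shift_mat n = mat n (n - 1) (\<lambda>(i,j). if i = Suc j then 1 else 0)"

lemma shift_mat_dim [simp]: "dim_row (shift_mat n) = n" "dim_col (shift_mat n) = n - 1"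
  unfolding shift_mat_def by auto

lemma shift_mat_carrier: "shift_mat n \<in> carrier_mat n (n - 1)"
  by auto

lemma shift_mat_mult_vec_nth:
  fixes c :: "'a::field vec"
  assumes c: "c \<in> carrier_vec (n - 1)" and i: "i < n"
  shows "(shift_mat n *\<^sub>v c) $ i = (if i = 0 then 0 else c $ (i - 1))"
proof -
  have "(shift_mat n *\<^sub>v c) $ i = (\<Sum>j = 0..<n - 1. (if j = i - 1 \<and> i \<noteq> 0 then 1 else 0) * c $ j)"
    using c i unfolding shift_mat_def by (auto simp: scalar_prod_def intro!: sum.cong)
  then show ?thesis using i by (cases "i = 0") (auto simp: sum_if_eq_mult)
qed

lemma mat_kernel_Rblk: "mat_kernel (Rblk k :: 'a::field mat) = first_axis k"
proof -
  have "Rblk k *\<^sub>v x = 0\<^sub>v (k - 1) \<longleftrightarrow> (\<forall>i. 0 < i \<and> i < k \<longrightarrow> x $ i = 0)"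
    if x: "x \<in> carrier_vec k" for x :: "'a vec"
  proof -
    have "Rblk k *\<^sub>v x = 0\<^sub>v (k - 1) \<longleftrightarrow> (\<forall>i < k - 1. x $ Suc i = 0)"
      using Rblk_mult_vec_nth[OF x] Rblk_carrier[of k] x by (auto simp: vec_eq_iff)
    also have "\<dots> \<longleftrightarrow> (\<forall>i. 0 < i \<and> i < k \<longrightarrow> x $ i = 0)"
    proof
      assume shifted: "\<forall>i < k - 1. x $ Suc i = 0"
      show "\<forall>i. 0 < i \<and> i < k \<longrightarrow> x $ i = 0"
      proof (intro allI impI)
        fix i assume "0 < i \<and> i < k"
        then have "i - 1 < k - 1" and "Suc (i - 1) = i" by auto
        then show "x $ i = 0" using shifted by metis
      qed
    qed auto
    finally show ?thesis .
  qed
  then show ?thesis unfolding mat_kernel[OF Rblk_carrier] first_axis_def by auto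
qed

lemma ker_image_LR: "ker_image (Lblk k :: 'a::field mat) (Rblk k) = first_axis (k - 1)"
proof (intro equalityI subsetI)
  fix y :: "'a vec" assume "y \<in> ker_image (Lblk k) (Rblk k)"
  then obtain x where x: "x \<in> first_axis k" and y: "y = Lblk k *\<^sub>v x"
    unfolding ker_image_def mat_kernel_Rblk by auto
  then have xc: "x \<in> carrier_vec k" unfolding first_axis_def by auto
  then have "y $ i = 0" if "0 < i" "i < k - 1" for i
    using x Lblk_mult_vec_nth[of x k i] that unfolding y first_axis_def by simp
  moreover have "y \<in> carrier_vec (k - 1)" unfolding y using mult_mat_vec_carrier[OF Lblk_carrier xc] .
  ultimately show "y \<in> first_axis (k - 1)" unfolding first_axis_def by auto
next
  fix y :: "'a vec" assume y: "y \<in> first_axis (k - 1)"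
  define x where "x = vec k (\<lambda>i. if i = 0 then y $ 0 else 0)"
  have x: "x \<in> carrier_vec k" unfolding x_def by auto
  have "Lblk k *\<^sub>v x = y"
    using y Lblk_mult_vec_nth[OF x] Lblk_carrier[of k]
    by (intro eq_vecI) (auto simp: first_axis_def x_def)
  moreover have "x \<in> mat_kernel (Rblk k)" unfolding mat_kernel_Rblk first_axis_def x_def by auto
  ultimately show "y \<in> ker_image (Lblk k) (Rblk k)" unfolding ker_image_def by (metis image_eqI)
qed

lemma quot_basis_shift_mat: "quot_basis (first_axis n :: 'a::field vec set) (shift_mat n)"
  unfolding quot_basis_def carrier_matD[OF shift_mat_carrier]
proof (intro conjI ballI impI)
  fix c :: "'a vec" assume c: "c \<in> carrier_vec (n - 1)" and "shift_mat n *\<^sub>v c \<in> first_axis n"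
  then have "(shift_mat n *\<^sub>v c) $ Suc j = 0" if "j < n - 1" for j
    using that unfolding first_axis_def by auto
  then show "c = 0\<^sub>v (n - 1)" using c shift_mat_mult_vec_nth[OF c] by (intro eq_vecI) auto
next
  fix u :: "'a vec" assume u: "u \<in> carrier_vec n"
  define c where "c = vec (n - 1) (\<lambda>j. u $ Suc j)"
  have c: "c \<in> carrier_vec (n - 1)" unfolding c_def by auto
  have "(shift_mat n *\<^sub>v c) $ i = u $ i" if "0 < i" "i < n" for i
    using shift_mat_mult_vec_nth[OF c that(2)] that by (simp add: c_def)
  moreover have "shift_mat n *\<^sub>v c \<in> carrier_vec n" using mult_mat_vec_carrier[OF shift_mat_carrier c] .
  ultimately have "u - shift_mat n *\<^sub>v c \<in> first_axis n"
    using u unfolding first_axis_def by auto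
  with c show "\<exists>c\<in>carrier_vec (n - 1). u - shift_mat n *\<^sub>v c \<in> first_axis n" by blast
qed

lemma mat_cong_first_axisI:
  fixes X Y :: "'a::field mat"
  assumes X: "X \<in> carrier_mat n k" and Y: "Y \<in> carrier_mat n k"
    and nth: "\<And>c i. c \<in> carrier_vec k \<Longrightarrow> 0 < i \<Longrightarrow> i < n \<Longrightarrow> (X *\<^sub>v c) $ i = (Y *\<^sub>v c) $ i"
  shows "mat_cong (first_axis n) X Y"
  using X Y nth unfolding mat_cong_def first_axis_def by auto

lemma mat_cong_LR_shift:
  shows "mat_cong (first_axis (k - 1)) (Lblk k * shift_mat k :: 'a::field mat) (shift_mat (k - 1) * Lblk (k - 1))"
    and "mat_cong (first_axis (k - 1)) (Rblk k * shift_mat k :: 'a::field mat) (shift_mat (k - 1) * Rblk (k - 1))"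
proof -
  note carriers = Lblk_carrier[of k] Rblk_carrier[of k] Lblk_carrier[of "k - 1"]
    Rblk_carrier[of "k - 1"] shift_mat_carrier[of k] shift_mat_carrier[of "k - 1"]
  have Sc: "shift_mat k *\<^sub>v c \<in> carrier_vec k" if "c \<in> carrier_vec (k - 1)" for c :: "'a vec"
    using mult_mat_vec_carrier[OF shift_mat_carrier that] .
  show "mat_cong (first_axis (k - 1)) (Lblk k * shift_mat k :: 'a mat) (shift_mat (k - 1) * Lblk (k - 1))"
  proof (rule mat_cong_first_axisI)
    fix c :: "'a vec" and i assume c: "c \<in> carrier_vec (k - 1)" and i: "0 < i" "i < k - 1"
    have "((Lblk k * shift_mat k) *\<^sub>v c) $ i = (shift_mat k *\<^sub>v c) $ i"
      unfolding assoc_mult_mat_vec[OF Lblk_carrier shift_mat_carrier c]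
      using Lblk_mult_vec_nth[OF Sc[OF c]] i by simp
    also have "\<dots> = c $ (i - 1)" using shift_mat_mult_vec_nth[OF c] i by auto
    also have "\<dots> = (Lblk (k - 1) *\<^sub>v c) $ (i - 1)" using Lblk_mult_vec_nth[OF c] i by auto
    also have "\<dots> = ((shift_mat (k - 1) * Lblk (k - 1)) *\<^sub>v c) $ i"
      unfolding assoc_mult_mat_vec[OF shift_mat_carrier Lblk_carrier c]
      using shift_mat_mult_vec_nth[OF mult_mat_vec_carrier[OF Lblk_carrier c], of i] i by simp
    finally show "((Lblk k * shift_mat k) *\<^sub>v c) $ i = ((shift_mat (k - 1) * Lblk (k - 1)) *\<^sub>v c) $ i" .
  qed (use carriers in auto)
  show "mat_cong (first_axis (k - 1)) (Rblk k * shift_mat k :: 'a mat) (shift_mat (k - 1) * Rblk (k - 1))"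
  proof (rule mat_cong_first_axisI)
    fix c :: "'a vec" and i assume c: "c \<in> carrier_vec (k - 1)" and i: "0 < i" "i < k - 1"
    have "((Rblk k * shift_mat k) *\<^sub>v c) $ i = (shift_mat k *\<^sub>v c) $ Suc i"
      unfolding assoc_mult_mat_vec[OF Rblk_carrier shift_mat_carrier c]
      using Rblk_mult_vec_nth[OF Sc[OF c]] i by simp
    also have "\<dots> = c $ i" using shift_mat_mult_vec_nth[OF c] i by auto
    also have "\<dots> = (Rblk (k - 1) *\<^sub>v c) $ (i - 1)" using Rblk_mult_vec_nth[OF c, of "i - 1"] i by auto
    also have "\<dots> = ((shift_mat (k - 1) * Rblk (k - 1)) *\<^sub>v c) $ i"
      unfolding assoc_mult_mat_vec[OF shift_mat_carrier Rblk_carrier c]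
      using shift_mat_mult_vec_nth[OF mult_mat_vec_carrier[OF Rblk_carrier c], of i] i by simp
    finally show "((Rblk k * shift_mat k) *\<^sub>v c) $ i = ((shift_mat (k - 1) * Rblk (k - 1)) *\<^sub>v c) $ i" .
  qed (use carriers in auto)
qed

lemma induced_pair_LR:
  "induced_pair (k - 1) k (Lblk k :: 'a::field mat) (Rblk k) (shift_mat k) (shift_mat (k - 1))
     (Lblk (k - 1)) (Rblk (k - 1))"
  unfolding induced_pair_def mat_kernel_Rblk ker_image_LR
  by (intro conjI quot_basis_shift_mat mat_cong_LR_shift) (simp_all add: carrier_matI)

lemma induced_pair_regular:
  fixes D :: "'a::field mat"
  assumes D: "D \<in> carrier_mat r r" "invertible_mat D"
  shows "induced_pair r r (1\<^sub>m r) D (1\<^sub>m r) (1\<^sub>m r) (1\<^sub>m r) D"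
proof -
  obtain Di where Di: "Di \<in> carrier_mat r r" "Di * D = 1\<^sub>m r" using invertible_matE[OF D] by blast
  have K: "mat_kernel D = {0\<^sub>v r}"
  proof (intro equalityI subsetI)
    fix x assume "x \<in> mat_kernel D"
    then have x: "x \<in> carrier_vec r" "D *\<^sub>v x = 0\<^sub>v r" using mat_kernelD[OF D(1)] by auto
    then have "x = Di *\<^sub>v 0\<^sub>v r" using mult_mat_vec_cancel[OF D(1) Di x(1)] by simp
    then show "x \<in> {0\<^sub>v r}" using mult_mat_vec_zero[OF Di(1)] by simp
  qed (use mult_mat_vec_zero[OF D(1)] D(1) in \<open>auto intro: mat_kernelI\<close>)
  have W: "ker_image (1\<^sub>m r) D = {0\<^sub>v r}" unfolding ker_image_def K by auto
  have closed: "lin_closed r {0\<^sub>v r :: 'a vec}"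
    using lin_closed_ker_image[OF one_carrier_mat D(1)] unfolding W .
  have "quot_basis {0\<^sub>v r} (1\<^sub>m r :: 'a mat)"
    unfolding quot_basis_def by (auto intro!: bexI[of _ "_ :: 'a vec"])
  moreover have "mat_cong {0\<^sub>v r} (1\<^sub>m r * 1\<^sub>m r) (1\<^sub>m r * (1\<^sub>m r :: 'a mat))"
    by (rule mat_cong_refl[OF closed]) auto
  moreover have "mat_cong {0\<^sub>v r} (D * 1\<^sub>m r) (1\<^sub>m r * D)"
    using mat_cong_refl[OF closed D(1)] D(1) by simp
  ultimately show ?thesis unfolding induced_pair_def K W using D(1) by simp
qed

lemma induced_pair_decomp_pair:
  fixes D :: "'a::field mat"
  assumes D: "D \<in> carrier_mat r r" "invertible_mat D" and LR: "\<forall>b\<in>set bs. \<exists>k. b = LR k"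
  shows "\<exists>U V. induced_pair (r + sum_list (map blk_rows bs)) (r + sum_list (map blk_cols bs))
     (fst (decomp_pair r D bs)) (snd (decomp_pair r D bs)) U V
     (fst (decomp_pair r D (map shrink_blk bs))) (snd (decomp_pair r D (map shrink_blk bs)))"
  using LR
proof (induction bs rule: rev_induct)
  case Nil
  show ?case using induced_pair_regular[OF D] by (auto simp: decomp_pair_def)
next
  case (snoc b bs)
  then obtain k where b: "b = LR k" by auto
  obtain U V where "induced_pair (r + sum_list (map blk_rows bs)) (r + sum_list (map blk_cols bs))
     (fst (decomp_pair r D bs)) (snd (decomp_pair r D bs)) U V
     (fst (decomp_pair r D (map shrink_blk bs))) (snd (decomp_pair r D (map shrink_blk bs)))"
    using snoc by auto
  from induced_pair_dsum[OF this induced_pair_LR[of k]] show ?case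
    unfolding b by (auto simp: decomp_pair_snoc add.assoc)
qed

section \<open>The reduction of a regularizing decomposition\<close>

lemma shrink_filter_eq_filter_shrink:
  "\<forall>b\<in>set bs. b \<noteq> LR 0 \<Longrightarrow>
   map shrink_blk (filter (\<lambda>b. b \<noteq> LR 1) bs) = filter (\<lambda>b. b \<noteq> LR 0) (map shrink_blk bs)"
proof (induction bs)
  case (Cons b bs)
  then show ?case by (cases b) auto
qed simp

lemma count_LR1_eq:
  assumes "\<forall>b\<in>set bs. \<exists>k\<ge>1. b = LR k"
  shows "int (count_list bs (LR 1)) = int (sum_list (map blk_cols bs))
    - 2 * int (sum_list (map blk_cols (map shrink_blk bs))) + int (sum_list (map blk_rows (map shrink_blk bs)))"
  using assms
proof (induction bs)
  case (Cons b bs)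
  then obtain k where "b = LR k" "1 \<le> k" by auto
  with Cons show ?case by (cases "k = 1") auto
qed simp

lemma induced_pair_decomp_equiv:
  fixes A B :: "'a::field mat"
  assumes d: "induced_pair m n A B U V A2 B2" and LR: "\<forall>b\<in>set bs. \<exists>k. b = LR k"
    and dec: "reg_decomp A B r D bs"
  shows "pair_equiv A2 B2 (fst (decomp_pair r D (map shrink_blk bs))) (snd (decomp_pair r D (map shrink_blk bs)))"
    and "n = r + sum_list (map blk_cols bs)"
proof -
  let ?A' = "fst (decomp_pair r D bs)" and ?B' = "snd (decomp_pair r D bs)"
  from d have A: "A \<in> carrier_mat m n" unfolding induced_pair_def by auto
  from dec have D: "D \<in> carrier_mat r r" "invertible_mat D" and "pair_equiv A B ?A' ?B'"
    unfolding reg_decomp_def by auto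
  then obtain S R where A': "?A' \<in> carrier_mat m n" and B': "?B' \<in> carrier_mat m n"
    and S: "S \<in> carrier_mat m m" "invertible_mat S" and R: "R \<in> carrier_mat n n" "invertible_mat R"
    and SA: "S * A = ?A' * R" and SB: "S * B = ?B' * R"
    using A unfolding pair_equiv_def by auto
  have "?A' \<in> carrier_mat (r + sum_list (map blk_rows bs)) (r + sum_list (map blk_cols bs))"
    by (rule decomp_pair_carrier(1)[OF D(1)])
  then have dims: "m = r + sum_list (map blk_rows bs)" "n = r + sum_list (map blk_cols bs)"
    using A' by auto
  then show "n = r + sum_list (map blk_cols bs)" by simp
  obtain U0 V0 where "induced_pair m n ?A' ?B' U0 V0
      (fst (decomp_pair r D (map shrink_blk bs))) (snd (decomp_pair r D (map shrink_blk bs)))"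
    using induced_pair_decomp_pair[OF D LR] unfolding dims by blast
  with induced_pair_equiv[OF d S R A' B' SA SB]
  show "pair_equiv A2 B2 (fst (decomp_pair r D (map shrink_blk bs))) (snd (decomp_pair r D (map shrink_blk bs)))"
    by (rule induced_pair_unique)
qed

lemma reg_decomp_induced_pair:
  fixes A B :: "'a::field mat"
  assumes d: "induced_pair m n A B U V A2 B2" and LR: "\<forall>b\<in>set bs. \<exists>k\<ge>1. b = LR k"
    and dec: "reg_decomp A B r D bs"
  shows "reg_decomp A2 B2 r D (map shrink_blk (filter (\<lambda>b. b \<noteq> LR 1) bs))"
    and "int (count_list bs (LR 1)) = int n - 2 * int (dim_col U) + int (dim_col V)"
proof -
  let ?bs' = "map shrink_blk bs"
  have D: "D \<in> carrier_mat r r" "invertible_mat D" using dec unfolding reg_decomp_def by auto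
  have LR': "\<forall>b\<in>set bs. \<exists>k. b = LR k" using LR by blast
  note pe = induced_pair_decomp_equiv(1)[OF d LR' dec]
  have "decomp_pair r D (map shrink_blk (filter (\<lambda>b. b \<noteq> LR 1) bs)) = decomp_pair r D ?bs'"
    using LR shrink_filter_eq_filter_shrink[of bs] decomp_pair_remove_empty[OF D(1)] by force
  moreover have "\<forall>b\<in>set (map shrink_blk (filter (\<lambda>b. b \<noteq> LR 1) bs)). 1 \<le> blk_size b"
    using LR by force
  ultimately show "reg_decomp A2 B2 r D (map shrink_blk (filter (\<lambda>b. b \<noteq> LR 1) bs))"
    unfolding reg_decomp_def using D pe by simp
  have "A2 \<in> carrier_mat (dim_col V) (dim_col U)" using d unfolding induced_pair_def by auto
  then have "fst (decomp_pair r D ?bs') \<in> carrier_mat (dim_col V) (dim_col U)"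
    using pe unfolding pair_equiv_def by auto
  then have "dim_col V = r + sum_list (map blk_rows ?bs')" "dim_col U = r + sum_list (map blk_cols ?bs')"
    using decomp_pair_carrier(1)[OF D(1), of ?bs'] by auto
  then show "int (count_list bs (LR 1)) = int n - 2 * int (dim_col U) + int (dim_col V)"
    using count_LR1_eq[OF LR] induced_pair_decomp_equiv(2)[OF d LR' dec] by simp
qed

theorem lemma3:
  fixes A1 B1 A2 B2 D :: "'a::field mat"
    and m n r :: nat and us vs ws :: "'a vec list" and bs :: "blk list"
  defines "K1 \<equiv> {x \<in> carrier_vec n. B1 *\<^sub>v x = 0\<^sub>v m}"
  defines "W \<equiv> (\<lambda>x. A1 *\<^sub>v x) ` K1"
  defines "K2 \<equiv> {x \<in> carrier_vec n. B1 *\<^sub>v x \<in> W}"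
  assumes A1: "A1 \<in> carrier_mat m n" and B1: "B1 \<in> carrier_mat m n"
    and surjA: "surj_mat A1" and surjB: "surj_mat B1"
    and U2: "qbasis n K1 us" and V2: "qbasis m W vs"
    and A2: "induced_mat m A1 W us vs A2" and B2: "induced_mat m B1 W us vs B2"
    and U3: "qbasis n K2 ws"
    and dec: "reg_decomp A1 B1 r D bs"
  shows "reg_decomp A2 B2 r D (map shrink_blk (filter (\<lambda>b. b \<noteq> LR 1) bs))
       \<and> int (count_list bs (LR 1)) = int n - 2 * int (length us) + int (length ws)"
proof -
  have K1: "K1 = mat_kernel B1" unfolding K1_def mat_kernel[OF B1] by simp
  have W: "W = ker_image A1 B1" unfolding W_def K1 ker_image_def ..
  have d: "induced_pair m n A1 B1 (mat_of_cols n us) (mat_of_cols m vs) A2 B2"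
    using induced_pair_of_qbasis[OF A1 B1] U2 V2 A2 B2 unfolding K1 W by blast
  have LR: "\<forall>b\<in>set bs. \<exists>k\<ge>1. b = LR k" by (rule reg_decomp_surj_imp_LR[OF dec surjA surjB])
  have "quot_basis K2 (mat_of_cols n ws)" by (rule qbasis_imp_quot_basis[OF U3])
  then have "quot_basis W (B1 * mat_of_cols n ws)"
    unfolding K2_def by (rule quot_basis_mult_surj[OF B1 surjB mat_of_cols_carrier(1)])
  moreover have "B1 * mat_of_cols n ws \<in> carrier_mat m (length ws)" using B1 by auto
  ultimately have "length ws = length vs"
    unfolding W by (rule quot_basis_change[OF lin_closed_ker_image[OF A1 B1] _
      qbasis_imp_quot_basis[OF V2[unfolded W]] _ mat_of_cols_carrier(1)])
  then show ?thesis using reg_decomp_induced_pair[OF d LR dec] by simp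
qed

end
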